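(* Let $M\ge2$, $K\ge1$ be integers and let $\gamma_{0d},\sigma_{0d},\gamma_{0r},\sigma_{0r},\gamma_{rd},\sigma_{rd}>0$ ($r=1,\dots,K$) be constants. A message $m\in\{0,\dots,M-1\}$ is transmitted on the $(m+1)$-th of $M$ orthogonal carriers, and the destination observes vectors in $\mathbb{C}^M$ $$\mathbf{y}_{0d}=\sigma_{0d}\big(\sqrt{\gamma_{0d}}\,h_{0d}\mathbf{i}_{m+1}+\mathbf{n}_{0d}\big),\qquad \mathbf{y}_{rd}=\sigma_{0r}\sigma_{rd}\sqrt{\gamma_{0r}\gamma_{rd}}\,h_{0r}h_{rd}\mathbf{i}_{m+1}+\sigma_{0r}\sigma_{rd}\sqrt{\gamma_{rd}}\,h_{rd}\mathbf{n}_{0r}+\sigma_{rd}\mathbf{n}_{rd},\quad r=1,\dots,K,$$ where $\mathbf{i}_{m+1}$ is the $(m+1)$-th standard basis vector of $\mathbb{C}^M$, $\mathbf{y}_{ij}=[\mathrm{y}_{ij}(1),\dots,\mathrm{y}_{ij}(M)]^T$, and the scalars $h_{0d},h_{0r},h_{rd}\sim\mathcal{CN}(0,1)$ and vectors $\mathbf{n}_{0d},\mathbf{n}_{0r},\mathbf{n}_{rd}\sim\mathcal{CN}(\mathbf{0},\mathbf{I}_M)$ ($r=1,\dots,K$) are all mutually independent and independent of $m$. Then the maximum-likelihood detector of $m$ from $(\mathbf{y}_{0d},\mathbf{y}_{1d},\dots,\mathbf{y}_{Kd})$ is equivalently $$\hat m=\arg\max_{m\in\{0,\dots,M-1\}}\Bigg\{\frac{\gamma_{0d}}{1+\gamma_{0d}}\frac{|\mathrm{y}_{0d}(m+1)|^2}{\sigma_{0d}^2}+\sum_{r=1}^K\ln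 I\Big(\sigma_{0r}^2\gamma_{rd},\ (1+\gamma_{0r})\sigma_{0r}^2\gamma_{rd},\ \frac{\|\mathbf{y}_{rd}\|^2-|\mathrm{y}_{rd}(m+1)|^2}{\sigma_{rd}^2},\ \frac{|\mathrm{y}_{rd}(m+1)|^2}{\sigma_{rd}^2},\ M-1\Big)\Bigg\}.$$
   Context: $\mathcal{CN}(\boldsymbol{\mu},\boldsymbol{\Sigma})$ denotes a circularly symmetric complex Gaussian distribution; $\|\cdot\|$ is the Euclidean norm. For $\epsilon_1,\epsilon_2>0$, $\beta_1,\beta_2\ge 0$, $\lambda>0$, $$I(\epsilon_1,\epsilon_2,\beta_1,\beta_2,\lambda)=\int_0^\infty \frac{\exp\!\Big[-\Big(x+\frac{\beta_1}{1+\epsilon_1x}+\frac{\beta_2}{1+\epsilon_2x}\Big)\Big]}{(1+\epsilon_1x)^{\lambda}(1+\epsilon_2x)}\,dx.$$ (This model covers both the power-splitting and time-switching noncoherent amplify-and-forward energy-harvesting relay protocols via appropriate choices of the constants $\gamma,\sigma$.) *)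

theory Defs
  imports "HOL-Probability.Probability"
begin

text \<open>Links of the relay network: the direct link 0-d, the links 0-r and r-d.\<close>
datatype link = D0 | SR nat | RD nat

definition links :: "nat \<Rightarrow> link set" where
  "links K = insert D0 (SR ` {1..K} \<union> RD ` {1..K})"

definition CN01 :: "complex measure" where
  "CN01 = density lborel (\<lambda>z. ennreal (exp (- (cmod z)\<^sup>2) / pi))"

text \<open>CN(0, I_M) on C^M; vectors are functions on the index set {..<M} (index j = carrier j+1).\<close>
definition CNvec :: "nat \<Rightarrow> (nat \<Rightarrow> complex) measure" where
  "CNvec M = PiM {..<M} (\<lambda>_. CN01)"

definition fade_noise_law :: "nat \<Rightarrow> nat \<Rightarrow> ((link \<Rightarrow> complex) \<times> (link \<Rightarrow> nat \<Rightarrow> complex)) measure" where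
  "fade_noise_law K M = PiM (links K) (\<lambda>_. CN01) \<Otimes>\<^sub>M PiM (links K) (\<lambda>_. CNvec M)"

text \<open>Observation space: y r for r = 0 (direct link y_0d) and r = 1..K (y_rd), each in C^M,
  with reference (Lebesgue) measure.\<close>
definition obs_space :: "nat \<Rightarrow> nat \<Rightarrow> (nat \<Rightarrow> nat \<Rightarrow> complex) measure" where
  "obs_space K M = PiM {..K} (\<lambda>_. PiM {..<M} (\<lambda>_. (lborel :: complex measure)))"

definition unitv :: "nat \<Rightarrow> nat \<Rightarrow> complex" where
  "unitv m j = (if j = m then 1 else 0)"

definition obs :: "real \<Rightarrow> real \<Rightarrow> (nat \<Rightarrow> real) \<Rightarrow> (nat \<Rightarrow> real) \<Rightarrow> (nat \<Rightarrow> real) \<Rightarrow> (nat \<Rightarrow> real)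
    \<Rightarrow> nat \<Rightarrow> nat \<Rightarrow> nat \<Rightarrow> (link \<Rightarrow> complex) \<Rightarrow> (link \<Rightarrow> nat \<Rightarrow> complex) \<Rightarrow> nat \<Rightarrow> nat \<Rightarrow> complex" where
  "obs g0d s0d g0r s0r grd srd K M m h n =
     (\<lambda>r\<in>{..K}. \<lambda>j\<in>{..<M}.
        if r = 0 then complex_of_real s0d * (complex_of_real (sqrt g0d) * h D0 * unitv m j + n D0 j)
        else complex_of_real (s0r r * srd r * sqrt (g0r r * grd r)) * h (SR r) * h (RD r) * unitv m j
           + complex_of_real (s0r r * srd r * sqrt (grd r)) * h (RD r) * n (SR r) j
           + complex_of_real (srd r) * n (RD r) j)"

definition I_int :: "real \<Rightarrow> real \<Rightarrow> real \<Rightarrow> real \<Rightarrow> real \<Rightarrow> real" where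
  "I_int e1 e2 b1 b2 lam =
     (LBINT x:{0..}. exp (- (x + b1 / (1 + e1 * x) + b2 / (1 + e2 * x)))
                     / ((1 + e1 * x) powr lam * (1 + e2 * x)))"

definition ml_metric :: "real \<Rightarrow> real \<Rightarrow> (nat \<Rightarrow> real) \<Rightarrow> (nat \<Rightarrow> real) \<Rightarrow> (nat \<Rightarrow> real) \<Rightarrow> (nat \<Rightarrow> real)
    \<Rightarrow> nat \<Rightarrow> nat \<Rightarrow> (nat \<Rightarrow> nat \<Rightarrow> complex) \<Rightarrow> nat \<Rightarrow> real" where
  "ml_metric g0d s0d g0r s0r grd srd K M y m =
     g0d / (1 + g0d) * (cmod (y 0 m))\<^sup>2 / s0d\<^sup>2
     + (\<Sum>r = 1..K. ln (I_int ((s0r r)\<^sup>2 * grd r) ((1 + g0r r) * (s0r r)\<^sup>2 * grd r)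
            (((\<Sum>j<M. (cmod (y r j))\<^sup>2) - (cmod (y r m))\<^sup>2) / (srd r)\<^sup>2)
            ((cmod (y r m))\<^sup>2 / (srd r)\<^sup>2)
            (real M - 1)))"

definition argmax_set :: "nat \<Rightarrow> (nat \<Rightarrow> real) \<Rightarrow> nat set" where
  "argmax_set M f = {m \<in> {..<M}. \<forall>m'\<in>{..<M}. f m' \<le> f m}"

end

theory Submission
  imports Defs
begin

text \<open>Conditionally on all fading coefficients and on the relay noise vectors \<open>n\<^sub>0\<^sub>r\<close>, the
  observations are independent complex Gaussian vectors, so the likelihood of \<open>m\<close> is a product of
  Gaussian densities integrated against these variables. Integrating out \<open>n\<^sub>0\<^sub>r\<close> only inflates
  the variance of \<open>y\<^sub>r\<^sub>d\<close> by \<open>\<sigma>\<^sub>0\<^sub>r\<^sup>2\<sigma>\<^sub>r\<^sub>d\<^sup>2\<gamma>\<^sub>r\<^sub>d|h\<^sub>r\<^sub>d|\<^sup>2\<close>, and integrating out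
  \<open>h\<^sub>0\<^sub>d\<close> and \<open>h\<^sub>0\<^sub>r\<close> does the same on the \<open>(m+1)\<close>-th carrier only. The last integral, over
  \<open>h\<^sub>r\<^sub>d\<close>, depends only on \<open>x = |h\<^sub>r\<^sub>d|\<^sup>2\<close>, which is exponentially distributed, and
  becomes \<open>I(\<dots>)\<close>. The likelihood is therefore a positive factor independent of \<open>m\<close> times the
  exponential of the detection metric, so both have the same maximisers. Since densities are
  unique almost everywhere, every version of the likelihood has these maximisers almost everywhere.\<close>

lemma emeasure_lborel_cmod_sq_less:
  "emeasure (lborel::complex measure) {z. (cmod z)\<^sup>2 < b} = ennreal (pi * max b 0)"
proof (cases "b > 0")
  case True
  have "{z::complex. (cmod z)\<^sup>2 < b} = ball 0 (sqrt b)"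
  proof (intro set_eqI iffI)
    fix z :: complex
    have e: "cmod z = sqrt ((cmod z)\<^sup>2)" by simp
    show "z \<in> ball 0 (sqrt b)" if "z \<in> {z. (cmod z)\<^sup>2 < b}"
      using that by (simp add: dist_norm) (metis e real_sqrt_less_iff)
    show "z \<in> {z. (cmod z)\<^sup>2 < b}" if "z \<in> ball 0 (sqrt b)"
      using that by (simp add: dist_norm) (metis e real_sqrt_less_iff)
  qed
  then show ?thesis using True
    by (simp add: emeasure_ball unit_ball_vol_2 max_def)
next
  case False
  then have "{z::complex. (cmod z)\<^sup>2 < b} = {}"
    by auto (metis not_less zero_le_power2 order.strict_trans1)
  then show ?thesis using False by (simp add: max_def)
qed

text \<open>Both measures give the half-line \<open>{..<b}\<close> the area \<open>\<pi> b\<close> of the disc of radius \<open>\<surd>b\<close>.\<close>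

lemma distr_lborel_cmod_sq:
  "distr (lborel::complex measure) borel (\<lambda>z. (cmod z)\<^sup>2) =
     density lborel (\<lambda>x. ennreal pi * indicator {0..} x)"
proof (rule measure_eqI_generator_eq_countable[where E="range lessThan" and \<Omega>=UNIV
      and A="range (\<lambda>n::nat. {..<real n})"])
  show "Int_stable (range (lessThan :: real \<Rightarrow> _))"
    unfolding Int_stable_def by (auto simp: greaterThan_Int_greaterThan simp del: Int_iff)
  show "range lessThan \<subseteq> Pow (UNIV :: real set)" by auto
  show "sets (distr lborel borel (\<lambda>z::complex. (cmod z)\<^sup>2)) = sigma_sets UNIV (range lessThan)"
    by (simp add: borel_Iio)
  show "sets (density lborel (\<lambda>x. ennreal pi * indicator {0..} x))
      = sigma_sets UNIV (range (lessThan::real\<Rightarrow>_))"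
    by (simp add: borel_Iio)
  have distr_half_line:
    "emeasure (distr (lborel::complex measure) borel (\<lambda>z. (cmod z)\<^sup>2)) {..<b} = ennreal (pi * max b 0)" for b
    by (subst emeasure_distr) (auto simp: vimage_def emeasure_lborel_cmod_sq_less)
  have density_half_line:
    "emeasure (density lborel (\<lambda>x. ennreal pi * indicator {0..} x)) {..<b} = ennreal (pi * max b 0)"
    for b :: real
  proof -
    have "emeasure (density lborel (\<lambda>x. ennreal pi * indicator {0..} x)) {..<b}
        = (\<integral>\<^sup>+x. ennreal pi * indicator {0..<b} x \<partial>lborel)"
      by (subst emeasure_density) (auto intro!: nn_integral_cong split: split_indicator)
    also have "\<dots> = ennreal (pi * max b 0)"
      by (auto simp: nn_integral_cmult ennreal_mult max_def)
    finally show ?thesis .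
  qed
  show "emeasure (distr lborel borel (\<lambda>z::complex. (cmod z)\<^sup>2)) X =
        emeasure (density lborel (\<lambda>x. ennreal pi * indicator {0..} x)) X"
    if "X \<in> range lessThan" for X using that distr_half_line density_half_line by auto
  show "range (\<lambda>n::nat. {..<real n}) \<subseteq> range lessThan" by auto
  show "\<Union> (range (\<lambda>n::nat. {..<real n})) = UNIV"
    by (auto intro: reals_Archimedean2)
  show "countable (range (\<lambda>n::nat. {..<real n}))" by auto
  show "emeasure (distr lborel borel (\<lambda>z::complex. (cmod z)\<^sup>2)) a \<noteq> \<infinity>"
    if "a \<in> range (\<lambda>n::nat. {..<real n})" for a using that distr_half_line by auto
qed

lemma nn_integral_lborel_complex_radial:
  fixes G :: "real \<Rightarrow> ennreal"
  assumes [measurable]: "G \<in> borel_measurable borel"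
  shows "(\<integral>\<^sup>+z. G ((cmod z)\<^sup>2) \<partial>(lborel::complex measure))
       = ennreal pi * (\<integral>\<^sup>+x. G x * indicator {0..} x \<partial>lborel)"
proof -
  have "(\<integral>\<^sup>+z. G ((cmod z)\<^sup>2) \<partial>(lborel::complex measure))
      = (\<integral>\<^sup>+x. G x \<partial>distr lborel borel (\<lambda>z::complex. (cmod z)\<^sup>2))"
    by (simp add: nn_integral_distr)
  also have "\<dots> = (\<integral>\<^sup>+x. ennreal pi * (G x * indicator {0..} x) \<partial>lborel)"
    by (simp add: distr_lborel_cmod_sq nn_integral_density mult_ac)
  finally show ?thesis
    by (simp add: nn_integral_cmult)
qed

lemma nn_integral_exp_neg_nonneg:
  "(\<integral>\<^sup>+x. ennreal (exp (- x)) * indicator {0..} x \<partial>lborel) = 1"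
proof -
  interpret prob_space "density lborel (exponential_density 1)"
    by (rule prob_space_exponential_density) simp
  have "(\<integral>\<^sup>+x. ennreal (exponential_density 1 x) \<partial>lborel) = 1"
    using emeasure_space_1 by (simp add: emeasure_density)
  moreover have "(\<lambda>x. ennreal (exponential_density 1 x)) = (\<lambda>x. ennreal (exp (- x)) * indicator {0..} x)"
    by (auto simp: exponential_density_def fun_eq_iff split: split_indicator)
  ultimately show ?thesis by simp
qed

lemma nn_integral_gauss_complex:
  "(\<integral>\<^sup>+z. ennreal (exp (- (cmod z)\<^sup>2)) \<partial>(lborel::complex measure)) = ennreal pi"
  using nn_integral_lborel_complex_radial[of "\<lambda>x. ennreal (exp (-x))"]
  by (simp add: nn_integral_exp_neg_nonneg)

lemma nn_integral_lborel_complex_affine: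
  fixes f :: "complex \<Rightarrow> ennreal" and c :: real and t :: complex
  assumes [measurable]: "f \<in> borel_measurable borel" and c: "c \<noteq> 0"
  shows "(\<integral>\<^sup>+z. f z \<partial>lborel) = ennreal (c\<^sup>2) * (\<integral>\<^sup>+z. f (t + c *\<^sub>R z) \<partial>lborel)"
proof -
  have "(\<integral>\<^sup>+z. f z \<partial>lborel) = (\<integral>\<^sup>+z. f z \<partial>density (distr lborel borel (\<lambda>x. t + c *\<^sub>R x))
          (\<lambda>_. ennreal (\<bar>c\<bar> ^ DIM(complex))))"
    using lborel_affine[OF c, of t] by simp
  also have "\<dots> = (\<integral>\<^sup>+z. ennreal (c\<^sup>2) * f (t + c *\<^sub>R z) \<partial>lborel)"
    by (simp add: nn_integral_density nn_integral_distr)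
  finally show ?thesis
    by (simp add: nn_integral_cmult)
qed

lemma nn_integral_gauss_shift:
  fixes w :: complex and a :: real
  assumes a: "a > 0"
  shows "(\<integral>\<^sup>+z. ennreal (exp (- a * (cmod (z - w))\<^sup>2)) \<partial>lborel) = ennreal (pi / a)"
proof -
  define c where "c = 1 / sqrt a"
  have c: "c \<noteq> 0" "c\<^sup>2 = 1 / a" using a by (auto simp: c_def power_divide)
  have "(\<integral>\<^sup>+z. ennreal (exp (- a * (cmod (z - w))\<^sup>2)) \<partial>lborel)
      = ennreal (c\<^sup>2) * (\<integral>\<^sup>+z. ennreal (exp (- a * (cmod (w + c *\<^sub>R z - w))\<^sup>2)) \<partial>lborel)"
    by (rule nn_integral_lborel_complex_affine) (auto simp: c)
  also have "(\<lambda>z. ennreal (exp (- a * (cmod (w + c *\<^sub>R z - w))\<^sup>2))) = (\<lambda>z. ennreal (exp (- (cmod z)\<^sup>2)))"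
    using a by (auto simp: fun_eq_iff power_mult_distrib c(2))
  finally show ?thesis using a
    by (simp add: nn_integral_gauss_complex c ennreal_mult'[symmetric])
qed

lemma cmod_sq_complete_square:
  fixes z b t :: complex and s :: real
  assumes s: "s > 0"
  defines "D \<equiv> s + (cmod t)\<^sup>2"
  shows "(cmod z)\<^sup>2 + (cmod (b - t * z))\<^sup>2 / s
       = D / s * (cmod (z - cnj t * b / complex_of_real D))\<^sup>2 + (cmod b)\<^sup>2 / D"
proof -
  have D: "D > 0" using s by (simp add: D_def add_pos_nonneg)
  have key: "s * D * (cmod z)\<^sup>2 + D * (cmod (b - t * z))\<^sup>2
      = (cmod (of_real D * z - cnj t * b))\<^sup>2 + s * (cmod b)\<^sup>2"
  proof -
    obtain zr zi br bi tr ti where z: "z = Complex zr zi" and b: "b = Complex br bi"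
      and t: "t = Complex tr ti"
      by (metis complex.exhaust)
    have D_eq: "D = s + tr\<^sup>2 + ti\<^sup>2" by (simp add: D_def t cmod_power2)
    show ?thesis unfolding D_eq
      by (simp add: z b t cmod_power2, simp add: power2_eq_square, algebra)
  qed
  have shift: "z - cnj t * b / complex_of_real D = (of_real D * z - cnj t * b) / of_real D"
    using D by (simp add: field_simps)
  have "(cmod z)\<^sup>2 + (cmod (b - t * z))\<^sup>2 / s
      = (s * D * (cmod z)\<^sup>2 + D * (cmod (b - t * z))\<^sup>2) / (s * D)"
    using s D by (simp add: field_simps)
  also have "\<dots> = ((cmod (of_real D * z - cnj t * b))\<^sup>2 + s * (cmod b)\<^sup>2) / (s * D)"
    by (simp add: key)
  also have "\<dots> = D / s * (cmod (z - cnj t * b / complex_of_real D))\<^sup>2 + (cmod b)\<^sup>2 / D"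
    unfolding shift using s D
    by (simp add: norm_divide field_simps power2_eq_square)
  finally show ?thesis .
qed

definition cgauss_density :: "real \<Rightarrow> complex \<Rightarrow> real" where
  "cgauss_density s w = exp (- (cmod w)\<^sup>2 / s) / (pi * s)"

lemma cgauss_density_nonneg: "s \<ge> 0 \<Longrightarrow> cgauss_density s w \<ge> 0"
  by (simp add: cgauss_density_def)

lemma cgauss_density_measurable[measurable]:
  fixes f :: "_ \<Rightarrow> complex"
  assumes [measurable]: "f \<in> borel_measurable M"
  shows "(\<lambda>w. cgauss_density s (f w)) \<in> borel_measurable M"
  unfolding cgauss_density_def by measurable

text \<open>Completing the square in \<open>z\<close> turns the integrand into a Gaussian bump centred at
  \<open>cnj t b / (s + |t|\<^sup>2)\<close>.\<close>

lemma nn_integral_lborel_cgauss_convolution: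
  fixes b t :: complex and s :: real
  assumes s: "s > 0"
  shows "(\<integral>\<^sup>+z. ennreal (cgauss_density 1 z * cgauss_density s (b - t * z)) \<partial>lborel)
       = ennreal (cgauss_density (s + (cmod t)\<^sup>2) b)"
proof -
  define D where "D = s + (cmod t)\<^sup>2"
  define p where "p = cnj t * b / complex_of_real D"
  define C where "C = exp (- (cmod b)\<^sup>2 / D) / (pi * pi * s)"
  have D: "D > 0" using s by (simp add: D_def add_pos_nonneg)
  have C: "C \<ge> 0" using s by (simp add: C_def)
  have integrand: "cgauss_density 1 z * cgauss_density s (b - t * z) = C * exp (- (D / s) * (cmod (z - p))\<^sup>2)"
    for z
  proof -
    have "exp (- (cmod z)\<^sup>2) * exp (- (cmod (b - t * z))\<^sup>2 / s)
        = exp (- ((cmod z)\<^sup>2 + (cmod (b - t * z))\<^sup>2 / s))"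
      by (simp add: exp_add[symmetric])
    also have "\<dots> = exp (- (cmod b)\<^sup>2 / D) * exp (- (D / s) * (cmod (z - p))\<^sup>2)"
      unfolding cmod_sq_complete_square[OF s, of z b t] D_def p_def by (simp add: exp_add[symmetric])
    finally show ?thesis by (simp add: cgauss_density_def C_def field_simps)
  qed
  have "(\<integral>\<^sup>+z. ennreal (cgauss_density 1 z * cgauss_density s (b - t * z)) \<partial>lborel)
      = (\<integral>\<^sup>+z. ennreal C * ennreal (exp (- (D / s) * (cmod (z - p))\<^sup>2)) \<partial>lborel)"
    by (intro nn_integral_cong) (simp add: integrand ennreal_mult[OF C])
  also have "\<dots> = ennreal C * ennreal (pi / (D / s))"
    using nn_integral_gauss_shift[of "D / s" p] s D by (simp add: nn_integral_cmult)
  also have "\<dots> = ennreal (cgauss_density D b)"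
    using s D C by (simp add: ennreal_mult[symmetric] C_def cgauss_density_def field_simps)
  finally show ?thesis by (simp add: D_def)
qed

lemma CN01_eq_density_cgauss: "CN01 = density lborel (\<lambda>z. ennreal (cgauss_density 1 z))"
  by (simp add: CN01_def cgauss_density_def)

lemma sets_CN01[measurable_cong, simp]: "sets CN01 = sets borel"
  by (simp add: CN01_def)

lemma space_CN01[simp]: "space CN01 = UNIV"
  by (simp add: CN01_def)

lemma nn_integral_CN01:
  "f \<in> borel_measurable borel \<Longrightarrow>
     (\<integral>\<^sup>+z. f z \<partial>CN01) = (\<integral>\<^sup>+z. ennreal (cgauss_density 1 z) * f z \<partial>lborel)"
  by (simp add: CN01_eq_density_cgauss nn_integral_density)

lemma prob_space_CN01: "prob_space CN01"
proof
  have "emeasure CN01 (space CN01) = (\<integral>\<^sup>+z. ennreal (exp (- (cmod z)\<^sup>2) / pi) \<partial>lborel)"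
    by (simp add: CN01_def emeasure_density)
  also have "\<dots> = (\<integral>\<^sup>+z. ennreal (exp (- (cmod z)\<^sup>2)) * ennreal (1 / pi) \<partial>lborel)"
    by (intro nn_integral_cong) (simp add: ennreal_mult[symmetric] divide_inverse)
  also have "\<dots> = ennreal pi * ennreal (1 / pi)"
    by (simp add: nn_integral_multc nn_integral_gauss_complex)
  also have "\<dots> = 1"
    by (simp add: ennreal_mult[symmetric])
  finally show "emeasure CN01 (space CN01) = 1" .
qed

lemma prob_space_CNvec: "prob_space (CNvec M)"
  unfolding CNvec_def by (intro prob_space_PiM prob_space_CN01)

lemma distr_CN01_affine:
  fixes a :: complex and c :: real
  assumes c: "c > 0"
  shows "distr CN01 lborel (\<lambda>z. a + complex_of_real c * z)
       = density lborel (\<lambda>y. ennreal (cgauss_density (c\<^sup>2) (y - a)))"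
proof (rule measure_eqI)
  fix A assume "A \<in> sets (distr CN01 lborel (\<lambda>z. a + complex_of_real c * z))"
  then have [measurable]: "A \<in> sets borel" by simp
  have density_scaled: "ennreal (cgauss_density 1 z) * indicator A (a + complex_of_real c * z)
      = ennreal (c\<^sup>2) * (ennreal (cgauss_density (c\<^sup>2) (a + c *\<^sub>R z - a)) * indicator A (a + c *\<^sub>R z))"
    for z
  proof -
    have "cgauss_density 1 z = c\<^sup>2 * cgauss_density (c\<^sup>2) (a + c *\<^sub>R z - a)"
      using c by (simp add: cgauss_density_def scaleR_conv_of_real norm_mult power_mult_distrib)
    then show ?thesis
      using c by (simp add: scaleR_conv_of_real ennreal_mult cgauss_density_nonneg mult.assoc)
  qed
  have affine_measurable: "(\<lambda>z. a + complex_of_real c * z) \<in> CN01 \<rightarrow>\<^sub>M lborel"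
    by (subst measurable_lborel1) measurable
  have "emeasure (distr CN01 lborel (\<lambda>z. a + complex_of_real c * z)) A
      = (\<integral>\<^sup>+z. indicator ((\<lambda>z. a + complex_of_real c * z) -` A \<inter> space CN01) z \<partial>CN01)"
    by (simp add: emeasure_distr[OF affine_measurable] del: space_CN01)
  also have "\<dots> = (\<integral>\<^sup>+z. indicator A (a + complex_of_real c * z) \<partial>CN01)"
    by (intro nn_integral_cong) (auto split: split_indicator)
  also have "\<dots> = (\<integral>\<^sup>+z. ennreal (c\<^sup>2) * (ennreal (cgauss_density (c\<^sup>2) (a + c *\<^sub>R z - a))
      * indicator A (a + c *\<^sub>R z)) \<partial>lborel)"
    by (simp add: nn_integral_CN01 density_scaled)
  also have "\<dots> = (\<integral>\<^sup>+y. ennreal (cgauss_density (c\<^sup>2) (y - a)) * indicator A y \<partial>lborel)"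
    using c by (subst nn_integral_lborel_complex_affine[where c=c and t=a]) (auto simp: nn_integral_cmult)
  finally show "emeasure (distr CN01 lborel (\<lambda>z. a + complex_of_real c * z)) A =
      emeasure (density lborel (\<lambda>y. ennreal (cgauss_density (c\<^sup>2) (y - a)))) A"
    by (simp add: emeasure_density)
qed simp

lemma nn_integral_CN01_cgauss_density:
  assumes s: "s > 0"
  shows "(\<integral>\<^sup>+z. ennreal (cgauss_density s (b - t * z)) \<partial>CN01) = ennreal (cgauss_density (s + (cmod t)\<^sup>2) b)"
proof -
  have "(\<integral>\<^sup>+z. ennreal (cgauss_density s (b - t * z)) \<partial>CN01)
      = (\<integral>\<^sup>+z. ennreal (cgauss_density 1 z * cgauss_density s (b - t * z)) \<partial>lborel)"
    using s by (simp add: nn_integral_CN01 ennreal_mult cgauss_density_nonneg)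
  then show ?thesis
    by (simp add: nn_integral_lborel_cgauss_convolution[OF s])
qed

lemma nn_integral_CN01_prod_cgauss_unitv:
  assumes s: "s > 0" and m: "m < M"
  shows "(\<integral>\<^sup>+z. (\<Prod>j\<in>{..<M}. ennreal (cgauss_density s (b j - c * z * unitv m j))) \<partial>CN01)
       = ennreal (cgauss_density (s + (cmod c)\<^sup>2) (b m)) * (\<Prod>j\<in>{..<M} - {m}. ennreal (cgauss_density s (b j)))"
proof -
  have split_m: "(\<Prod>j\<in>{..<M}. ennreal (cgauss_density s (b j - c * z * unitv m j)))
      = ennreal (cgauss_density s (b m - c * z)) * (\<Prod>j\<in>{..<M} - {m}. ennreal (cgauss_density s (b j)))"
    for z
    using m by (subst prod.remove[of _ m]) (auto simp: unitv_def intro!: prod.cong)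
  have "(\<lambda>z. ennreal (cgauss_density s (b m - c * z))) \<in> borel_measurable CN01"
    by measurable
  then show ?thesis
    unfolding split_m by (simp add: nn_integral_multc nn_integral_CN01_cgauss_density[OF s])
qed

lemma sigma_finite_PiM_lborel:
  assumes "finite I"
  shows "sigma_finite_measure (PiM I (\<lambda>_. (lborel :: complex measure)))"
proof -
  interpret product_sigma_finite "\<lambda>_. (lborel :: complex measure)"
    unfolding product_sigma_finite_def by (simp add: sigma_finite_lborel)
  show ?thesis by (rule sigma_finite[OF assms])
qed

lemma distr_PiM_restrict_prob_space:
  fixes M :: "'b measure" and Q :: "'c measure"
  assumes fin: "finite I" and M: "prob_space M" and Q: "sigma_finite_measure Q"
    and \<tau>[measurable]: "\<And>i. i \<in> I \<Longrightarrow> \<tau> i \<in> measurable M Q"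
  shows "distr (PiM I (\<lambda>_. M)) (PiM I (\<lambda>_. Q)) (\<lambda>x. \<lambda>i\<in>I. \<tau> i (x i)) = PiM I (\<lambda>i. distr M Q (\<tau> i))"
proof -
  define D where "D i = (if i \<in> I then distr M Q (\<tau> i) else Q)" for i
  have "sigma_finite_measure (D i)" for i
    using M Q \<tau> by (auto simp: D_def prob_space_imp_sigma_finite prob_space.prob_space_distr)
  then interpret D: product_sigma_finite D
    unfolding product_sigma_finite_def by simp
  interpret M: product_sigma_finite "\<lambda>_. M"
    unfolding product_sigma_finite_def using M by (simp add: prob_space_imp_sigma_finite)
  have restrict_measurable: "(\<lambda>x. \<lambda>i\<in>I. \<tau> i (x i)) \<in> PiM I (\<lambda>_. M) \<rightarrow>\<^sub>M PiM I (\<lambda>_. Q)"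
    by (rule measurable_restrict) measurable
  have "distr (PiM I (\<lambda>_. M)) (PiM I (\<lambda>_. Q)) (\<lambda>x. \<lambda>i\<in>I. \<tau> i (x i)) = PiM I D"
  proof (rule D.PiM_eqI[OF fin])
    show "sets (distr (PiM I (\<lambda>_. M)) (PiM I (\<lambda>_. Q)) (\<lambda>x. \<lambda>i\<in>I. \<tau> i (x i))) = sets (PiM I D)"
      by (simp add: D_def cong: sets_PiM_cong)
    fix A assume "\<And>i. i \<in> I \<Longrightarrow> A i \<in> sets (D i)"
    then have A: "\<And>i. i \<in> I \<Longrightarrow> A i \<in> sets Q" by (simp add: D_def)
    have preimage: "(\<lambda>x. \<lambda>i\<in>I. \<tau> i (x i)) -` PiE I A \<inter> space (PiM I (\<lambda>_. M))
        = PiE I (\<lambda>i. \<tau> i -` A i \<inter> space M)"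
      by (auto simp: space_PiM PiE_iff extensional_def)
    have "emeasure (distr (PiM I (\<lambda>_. M)) (PiM I (\<lambda>_. Q)) (\<lambda>x. \<lambda>i\<in>I. \<tau> i (x i))) (PiE I A)
        = emeasure (PiM I (\<lambda>_. M)) (PiE I (\<lambda>i. \<tau> i -` A i \<inter> space M))"
      using A by (subst emeasure_distr[OF restrict_measurable])
        (auto simp: preimage intro!: sets_PiM_I_finite fin)
    also have "\<dots> = (\<Prod>i\<in>I. emeasure M (\<tau> i -` A i \<inter> space M))"
      using A by (intro M.emeasure_PiM fin) (auto intro: measurable_sets)
    finally show "emeasure (distr (PiM I (\<lambda>_. M)) (PiM I (\<lambda>_. Q)) (\<lambda>x. \<lambda>i\<in>I. \<tau> i (x i))) (PiE I A)
        = (\<Prod>i\<in>I. emeasure (D i) (A i))"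
      using A by (simp add: D_def emeasure_distr)
  qed
  then show ?thesis
    by (simp add: D_def cong: PiM_cong)
qed

lemma PiM_density_eq_density_prod:
  fixes Q :: "'c measure"
  assumes fin: "finite I" and Q: "sigma_finite_measure Q"
    and d[measurable]: "\<And>i. i \<in> I \<Longrightarrow> d i \<in> borel_measurable Q"
    and sf: "\<And>i. i \<in> I \<Longrightarrow> sigma_finite_measure (density Q (d i))"
  shows "PiM I (\<lambda>i. density Q (d i)) = density (PiM I (\<lambda>_. Q)) (\<lambda>y. \<Prod>i\<in>I. d i (y i))"
proof -
  define D where "D i = (if i \<in> I then density Q (d i) else Q)" for i
  have "sigma_finite_measure (D i)" for i
    using Q sf by (simp add: D_def)
  then interpret D: product_sigma_finite D
    unfolding product_sigma_finite_def by simp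
  interpret Q: product_sigma_finite "\<lambda>_. Q"
    unfolding product_sigma_finite_def using Q by simp
  have "density (PiM I (\<lambda>_. Q)) (\<lambda>y. \<Prod>i\<in>I. d i (y i)) = PiM I D"
  proof (rule D.PiM_eqI[OF fin])
    show "sets (density (PiM I (\<lambda>_. Q)) (\<lambda>y. \<Prod>i\<in>I. d i (y i))) = sets (PiM I D)"
      by (simp add: D_def cong: sets_PiM_cong)
    fix A assume "\<And>i. i \<in> I \<Longrightarrow> A i \<in> sets (D i)"
    then have A[measurable]: "\<And>i. i \<in> I \<Longrightarrow> A i \<in> sets Q" by (simp add: D_def)
    have indicator_PiE: "indicator (PiE I A) y = (\<Prod>i\<in>I. indicator (A i) (y i) :: ennreal)"
      if "y \<in> space (PiM I (\<lambda>_. Q))" for y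
    proof (cases "y \<in> PiE I A")
      case False
      with that obtain i where "i \<in> I" "y i \<notin> A i" by (auto simp: space_PiM PiE_iff)
      then have "(\<Prod>i\<in>I. indicator (A i) (y i) :: ennreal) = 0"
        using fin by (intro prod_zero) (auto intro!: bexI[of _ i])
      with False show ?thesis by simp
    qed (auto simp: PiE_iff)
    have "emeasure (density (PiM I (\<lambda>_. Q)) (\<lambda>y. \<Prod>i\<in>I. d i (y i))) (PiE I A)
        = (\<integral>\<^sup>+y. (\<Prod>i\<in>I. d i (y i) * indicator (A i) (y i)) \<partial>PiM I (\<lambda>_. Q))"
      using A by (subst emeasure_density) (auto intro!: sets_PiM_I_finite fin nn_integral_cong
          simp: indicator_PiE prod.distrib)
    also have "\<dots> = (\<Prod>i\<in>I. \<integral>\<^sup>+y. d i y * indicator (A i) y \<partial>Q)"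
      by (rule Q.product_nn_integral_prod[OF fin]) measurable
    finally show "emeasure (density (PiM I (\<lambda>_. Q)) (\<lambda>y. \<Prod>i\<in>I. d i (y i))) (PiE I A)
        = (\<Prod>i\<in>I. emeasure (D i) (A i))"
      by (simp add: D_def emeasure_density)
  qed
  then show ?thesis
    by (simp add: D_def cong: PiM_cong)
qed

lemma distr_PiM_restrict_density:
  fixes M :: "'b measure" and Q :: "'c measure"
  assumes fin: "finite I" and M: "prob_space M" and Q: "sigma_finite_measure Q"
    and \<tau>[measurable]: "\<And>i. i \<in> I \<Longrightarrow> \<tau> i \<in> measurable M Q"
    and d[measurable]: "\<And>i. i \<in> I \<Longrightarrow> d i \<in> borel_measurable Q"
    and distr_\<tau>: "\<And>i. i \<in> I \<Longrightarrow> distr M Q (\<tau> i) = density Q (d i)"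
  shows "distr (PiM I (\<lambda>_. M)) (PiM I (\<lambda>_. Q)) (\<lambda>x. \<lambda>i\<in>I. \<tau> i (x i))
       = density (PiM I (\<lambda>_. Q)) (\<lambda>y. \<Prod>i\<in>I. d i (y i))"
proof -
  have "sigma_finite_measure (density Q (d i))" if "i \<in> I" for i
    using that M distr_\<tau>[symmetric]
    by (auto simp: prob_space_imp_sigma_finite prob_space.prob_space_distr)
  then show ?thesis
    by (simp add: distr_PiM_restrict_prob_space[OF fin M Q] distr_\<tau> PiM_density_eq_density_prod[OF fin Q]
        cong: PiM_cong)
qed

lemma nn_integral_PiM_prod_reindex:
  fixes N :: "'b measure" and \<iota> :: "'a \<Rightarrow> 'c"
  assumes fin: "finite A" and inj: "inj_on \<iota> A" and N: "sigma_finite_measure N"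
    and f: "\<And>a. a \<in> A \<Longrightarrow> f a \<in> borel_measurable N"
  shows "(\<integral>\<^sup>+x. (\<Prod>a\<in>A. f a (x (\<iota> a))) \<partial>PiM (\<iota> ` A) (\<lambda>_. N)) = (\<Prod>a\<in>A. \<integral>\<^sup>+w. f a w \<partial>N)"
proof -
  interpret N: product_sigma_finite "\<lambda>_::'c. N"
    unfolding product_sigma_finite_def using N by simp
  define F where "F l = f (the_inv_into A \<iota> l)" for l
  have F: "F (\<iota> a) = f a" if "a \<in> A" for a
    using that inj by (simp add: F_def the_inv_into_f_f)
  have "(\<integral>\<^sup>+x. (\<Prod>a\<in>A. f a (x (\<iota> a))) \<partial>PiM (\<iota> ` A) (\<lambda>_. N))
      = (\<integral>\<^sup>+x. (\<Prod>l\<in>\<iota> ` A. F l (x l)) \<partial>PiM (\<iota> ` A) (\<lambda>_. N))"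
    by (simp add: prod.reindex[OF inj] F cong: prod.cong)
  also have "\<dots> = (\<Prod>l\<in>\<iota> ` A. \<integral>\<^sup>+w. F l w \<partial>N)"
    by (rule N.product_nn_integral_prod) (use fin f F in auto)
  also have "\<dots> = (\<Prod>a\<in>A. \<integral>\<^sup>+w. f a w \<partial>N)"
    by (simp add: prod.reindex[OF inj] F cong: prod.cong)
  finally show ?thesis .
qed

lemma measurable_PiM_component_borel:
  fixes N :: "'i \<Rightarrow> 'b::topological_space measure"
  assumes "\<And>i. sets (N i) = sets borel"
  shows "(\<lambda>x. x i) \<in> borel_measurable (PiM I N)"
proof (cases "i \<in> I")
  case True
  then have "(\<lambda>x. x i) \<in> measurable (PiM I N) (N i)" by simp
  then show ?thesis using assms by (simp add: measurable_cong_sets[OF refl assms])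
next
  case False
  have undef: "x i = undefined" if "x \<in> space (PiM I N)" for x
    using False that by (auto simp: space_PiM PiE_def extensional_def)
  show ?thesis by (subst measurable_cong[OF undef]) simp_all
qed

lemma measurable_PiM_PiM_component_borel:
  fixes N :: "'b::topological_space measure"
  assumes "sets N = sets borel"
  shows "(\<lambda>x. x i j) \<in> borel_measurable (PiM I (\<lambda>_. PiM J (\<lambda>_. N)))"
proof (cases "i \<in> I")
  case True
  have "(\<lambda>w. w j) \<in> borel_measurable (PiM J (\<lambda>_. N))"
    by (rule measurable_PiM_component_borel) (simp add: assms)
  with True show ?thesis by measurable
next
  case False
  have undef: "x i j = undefined j" if "x \<in> space (PiM I (\<lambda>_. PiM J (\<lambda>_. N)))" for x
    using False that by (auto simp: space_PiM PiE_def extensional_def)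
  show ?thesis by (subst measurable_cong[OF undef]) simp_all
qed

lemma measurable_PiM_CN01_component[measurable (raw)]:
  "(\<lambda>h. h l) \<in> borel_measurable (PiM L (\<lambda>_. CN01))"
  by (rule measurable_PiM_component_borel) simp

lemma measurable_PiM_CN01_component_dest[measurable_dest]:
  assumes "f \<in> measurable N (PiM L (\<lambda>_. CN01))" and "g \<in> measurable L' N"
  shows "(\<lambda>x. f (g x) l) \<in> borel_measurable L'"
  using measurable_compose[OF measurable_compose[OF assms(2) assms(1)] measurable_PiM_CN01_component] by simp

lemma measurable_PiM_CNvec_component[measurable (raw)]:
  "(\<lambda>x. x l j) \<in> borel_measurable (PiM L (\<lambda>_. CNvec M))"
  unfolding CNvec_def by (rule measurable_PiM_PiM_component_borel) simp

lemma measurable_PiM_CNvec_component_dest[measurable_dest]: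
  assumes "f \<in> measurable N (PiM L (\<lambda>_. CNvec M))" and "g \<in> measurable L' N"
  shows "(\<lambda>x. f (g x) l j) \<in> borel_measurable L'"
  using measurable_compose[OF measurable_compose[OF assms(2) assms(1)] measurable_PiM_CNvec_component] by simp

lemma measurable_obs_space_component[measurable (raw)]:
  "(\<lambda>y. y r j) \<in> borel_measurable (obs_space K M)"
  unfolding obs_space_def by (rule measurable_PiM_PiM_component_borel) simp

lemma measurable_obs_space_component_dest[measurable_dest]:
  assumes "f \<in> measurable N (obs_space K M)" and "g \<in> measurable L' N"
  shows "(\<lambda>x. f (g x) r j) \<in> borel_measurable L'"
  using measurable_compose[OF measurable_compose[OF assms(2) assms(1)] measurable_obs_space_component] by simp

lemma measurable_CNvec_component[measurable (raw)]:
  "(\<lambda>y. y j) \<in> borel_measurable (CNvec M)"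
  unfolding CNvec_def by (rule measurable_PiM_component_borel) simp

lemma measurable_CNvec_component_dest[measurable_dest]:
  assumes "f \<in> measurable N (CNvec M)" and "g \<in> measurable L' N"
  shows "(\<lambda>x. f (g x) j) \<in> borel_measurable L'"
  using measurable_compose[OF measurable_compose[OF assms(2) assms(1)] measurable_CNvec_component] by simp

lemma measurable_PiM_lborel_component[measurable (raw)]:
  "(\<lambda>y. y j) \<in> borel_measurable (PiM J (\<lambda>_. (lborel::complex measure)))"
  by (rule measurable_PiM_component_borel) simp

lemma measurable_PiM_lborel_component_dest[measurable_dest]:
  assumes "f \<in> measurable N (PiM J (\<lambda>_. (lborel::complex measure)))" and "g \<in> measurable L' N"
  shows "(\<lambda>x. f (g x) j) \<in> borel_measurable L'"
  using measurable_compose[OF measurable_compose[OF assms(2) assms(1)] measurable_PiM_lborel_component] by simp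

lemma obs_measurable[measurable]:
  assumes [measurable]: "h \<in> measurable N (PiM L (\<lambda>_. CN01))" "n \<in> measurable N (PiM L' (\<lambda>_. CNvec M))"
  shows "(\<lambda>w. obs g0d s0d g0r s0r grd srd K M m (h w) (n w)) \<in> measurable N (obs_space K M)"
  unfolding obs_def obs_space_def
  by (intro measurable_restrict) simp

definition I_integrand :: "real \<Rightarrow> real \<Rightarrow> real \<Rightarrow> real \<Rightarrow> real \<Rightarrow> real \<Rightarrow> real" where
  "I_integrand e1 e2 b1 b2 lam x =
     exp (- (x + b1 / (1 + e1 * x) + b2 / (1 + e2 * x))) / ((1 + e1 * x) powr lam * (1 + e2 * x))"

lemma I_int_eq_lebesgue_integral:
  "I_int e1 e2 b1 b2 lam = (\<integral>x. indicator {0..} x * I_integrand e1 e2 b1 b2 lam x \<partial>lborel)"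
  by (simp add: I_int_def I_integrand_def set_lebesgue_integral_def)

context
  fixes e1 e2 b1 b2 lam :: real
  assumes nonneg: "e1 \<ge> 0" "e2 \<ge> 0" "b1 \<ge> 0" "b2 \<ge> 0" "lam \<ge> 0"
begin

lemma I_integrand_pos_le_exp:
  assumes x: "x \<ge> 0"
  shows "I_integrand e1 e2 b1 b2 lam x > 0" and "I_integrand e1 e2 b1 b2 lam x \<le> exp (- x)"
proof -
  have ge1: "1 + e1 * x \<ge> 1" "1 + e2 * x \<ge> 1" using nonneg x by auto
  then have denom: "(1 + e1 * x) powr lam * (1 + e2 * x) \<ge> 1"
    using nonneg by (metis ge_one_powr_ge_zero mult_ge1_I)
  then show "I_integrand e1 e2 b1 b2 lam x > 0" by (simp add: I_integrand_def)
  have "b1 / (1 + e1 * x) \<ge> 0" "b2 / (1 + e2 * x) \<ge> 0" using nonneg ge1 by simp_all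
  then have "exp (- (x + b1 / (1 + e1 * x) + b2 / (1 + e2 * x))) \<le> exp (- x)" by simp
  moreover have "I_integrand e1 e2 b1 b2 lam x \<le> exp (- (x + b1 / (1 + e1 * x) + b2 / (1 + e2 * x)))"
    unfolding I_integrand_def using denom by (simp add: divide_le_eq)
  ultimately show "I_integrand e1 e2 b1 b2 lam x \<le> exp (- x)" by linarith
qed

lemma integrable_I_integrand: "integrable lborel (\<lambda>x. indicator {0..} x * I_integrand e1 e2 b1 b2 lam x)"
proof (rule Bochner_Integration.integrable_bound)
  show "integrable lborel (\<lambda>x. indicator {0..} x * exp (- x) :: real)"
  proof (rule integrableI_nonneg)
    have "(\<integral>\<^sup>+x. ennreal (indicator {0..} x * exp (- x)) \<partial>lborel)
        = (\<integral>\<^sup>+x. ennreal (exp (- x)) * indicator {0..} x \<partial>lborel)"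
      by (intro nn_integral_cong) (auto split: split_indicator)
    then show "(\<integral>\<^sup>+x. ennreal (indicator {0..} x * exp (- x)) \<partial>lborel) < \<infinity>"
      by (simp add: nn_integral_exp_neg_nonneg)
  qed auto
  show "(\<lambda>x. indicator {0..} x * I_integrand e1 e2 b1 b2 lam x) \<in> borel_measurable lborel"
    unfolding I_integrand_def by measurable
  show "AE x in lborel. norm (indicator {0..} x * I_integrand e1 e2 b1 b2 lam x)
      \<le> norm (indicator {0..} x * exp (- x) :: real)"
    using I_integrand_pos_le_exp by (auto split: split_indicator simp: less_imp_le)
qed

lemma nn_integral_I_integrand:
  "(\<integral>\<^sup>+x. ennreal (I_integrand e1 e2 b1 b2 lam x) * indicator {0..} x \<partial>lborel) = ennreal (I_int e1 e2 b1 b2 lam)"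
proof -
  have "(\<integral>\<^sup>+x. ennreal (I_integrand e1 e2 b1 b2 lam x) * indicator {0..} x \<partial>lborel)
      = (\<integral>\<^sup>+x. ennreal (indicator {0..} x * I_integrand e1 e2 b1 b2 lam x) \<partial>lborel)"
    by (intro nn_integral_cong) (auto split: split_indicator)
  also have "\<dots> = ennreal (I_int e1 e2 b1 b2 lam)"
    unfolding I_int_eq_lebesgue_integral
    by (rule nn_integral_eq_integral[OF integrable_I_integrand])
      (use I_integrand_pos_le_exp in \<open>auto split: split_indicator simp: less_imp_le\<close>)
  finally show ?thesis .
qed

text \<open>The integrand is positive on \<open>[0, \<infinity>)\<close>, a set of positive Lebesgue measure.\<close>

lemma I_int_pos: "I_int e1 e2 b1 b2 lam > 0"
proof -
  have "(\<integral>\<^sup>+x. ennreal (I_integrand e1 e2 b1 b2 lam x) * indicator {0..} x \<partial>lborel) \<noteq> 0"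
  proof
    assume "(\<integral>\<^sup>+x. ennreal (I_integrand e1 e2 b1 b2 lam x) * indicator {0..} x \<partial>lborel) = 0"
    then have "AE x in lborel. ennreal (I_integrand e1 e2 b1 b2 lam x) * indicator {0..} x = 0"
      by (subst (asm) nn_integral_0_iff_AE) (auto simp: I_integrand_def)
    moreover have "AE x in lborel. ennreal (I_integrand e1 e2 b1 b2 lam x) * indicator {0..} x = 0
        \<longrightarrow> x \<notin> {0::real..}"
      by (intro AE_I2)
        (use I_integrand_pos_le_exp(1) in \<open>auto split: split_indicator simp: ennreal_eq_0_iff not_le\<close>)
    ultimately have "AE x in lborel. x \<notin> {0::real..}"
      by eventually_elim auto
    then have "emeasure lborel {0::real..} = 0"
      by (subst (asm) AE_iff_measurable[of "{0..}"]) auto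
    moreover have "emeasure lborel {0::real..1} \<le> emeasure lborel {0::real..}"
      by (intro emeasure_mono) auto
    ultimately show False by simp
  qed
  moreover have "I_int e1 e2 b1 b2 lam \<ge> 0"
    unfolding I_int_eq_lebesgue_integral using I_integrand_pos_le_exp
    by (intro integral_nonneg_AE) (auto split: split_indicator simp: less_imp_le)
  ultimately show ?thesis
    by (simp add: nn_integral_I_integrand ennreal_eq_0_iff)
qed

end

lemma distr_CNvec_affine:
  assumes c: "c > 0"
  shows "distr (CNvec M) (PiM {..<M} (\<lambda>_. lborel)) (\<lambda>w. \<lambda>j\<in>{..<M}. a j + complex_of_real c * w j)
       = density (PiM {..<M} (\<lambda>_. lborel)) (\<lambda>w. \<Prod>j\<in>{..<M}. ennreal (cgauss_density (c\<^sup>2) (w j - a j)))"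
  unfolding CNvec_def
proof (rule distr_PiM_restrict_density)
  show "(\<lambda>z. a j + complex_of_real c * z) \<in> CN01 \<rightarrow>\<^sub>M lborel" for j
    by simp
  show "distr CN01 lborel (\<lambda>z. a j + complex_of_real c * z)
      = density lborel (\<lambda>w. ennreal (cgauss_density (c\<^sup>2) (w - a j)))" for j
    by (rule distr_CN01_affine[OF c])
qed (simp_all add: prob_space_CN01 sigma_finite_lborel)

lemma distr_CNvecs_affine:
  assumes c: "\<And>r. r \<in> {..K} \<Longrightarrow> c r > 0"
  shows "distr (PiM {..K} (\<lambda>_. CNvec M)) (obs_space K M)
      (\<lambda>v. \<lambda>r\<in>{..K}. \<lambda>j\<in>{..<M}. a r j + complex_of_real (c r) * v r j)
   = density (obs_space K M) (\<lambda>y. \<Prod>r\<in>{..K}. \<Prod>j\<in>{..<M}. ennreal (cgauss_density ((c r)\<^sup>2) (y r j - a r j)))"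
  unfolding obs_space_def
proof (rule distr_PiM_restrict_density)
  show "(\<lambda>w. \<lambda>j\<in>{..<M}. a r j + complex_of_real (c r) * w j) \<in> CNvec M \<rightarrow>\<^sub>M PiM {..<M} (\<lambda>_. lborel)" for r
    by (rule measurable_restrict) simp
  show "(\<lambda>w. \<Prod>j\<in>{..<M}. ennreal (cgauss_density ((c r)\<^sup>2) (w j - a r j)))
      \<in> borel_measurable (PiM {..<M} (\<lambda>_. lborel))" for r
    by measurable
  show "distr (CNvec M) (PiM {..<M} (\<lambda>_. lborel)) (\<lambda>w. \<lambda>j\<in>{..<M}. a r j + complex_of_real (c r) * w j)
      = density (PiM {..<M} (\<lambda>_. lborel)) (\<lambda>w. \<Prod>j\<in>{..<M}. ennreal (cgauss_density ((c r)\<^sup>2) (w j - a r j)))"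
    if "r \<in> {..K}" for r
    by (rule distr_CNvec_affine[OF c[OF that]])
qed (simp_all add: prob_space_CNvec sigma_finite_PiM_lborel)

lemma prod_cgauss_density_remove:
  assumes m: "m < M"
  shows "(\<Prod>j\<in>{..<M} - {m}. cgauss_density s (y j))
       = exp (((cmod (y m))\<^sup>2 - (\<Sum>j<M. (cmod (y j))\<^sup>2)) / s) / (pi * s) ^ (M - 1)"
proof -
  have "(\<Prod>j\<in>{..<M} - {m}. cgauss_density s (y j))
      = (\<Prod>j\<in>{..<M} - {m}. exp (- (cmod (y j))\<^sup>2 / s)) / (\<Prod>j\<in>{..<M} - {m}. pi * s)"
    by (simp add: cgauss_density_def prod_dividef)
  also have "(\<Prod>j\<in>{..<M} - {m}. exp (- (cmod (y j))\<^sup>2 / s)) = exp (\<Sum>j\<in>{..<M} - {m}. - (cmod (y j))\<^sup>2 / s)"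
    by (simp add: exp_sum)
  also have "(\<Sum>j\<in>{..<M} - {m}. - (cmod (y j))\<^sup>2 / s) = ((cmod (y m))\<^sup>2 - (\<Sum>j<M. (cmod (y j))\<^sup>2)) / s"
    using m by (simp add: sum_divide_distrib[symmetric] sum_negf sum_diff1 diff_divide_distrib)
  also have "(\<Prod>j\<in>{..<M} - {m}. pi * s) = (pi * s) ^ (M - 1)"
    using m by simp
  finally show ?thesis .
qed

lemma argmax_set_cong: "(\<And>m. m < M \<Longrightarrow> f m = g m) \<Longrightarrow> argmax_set M f = argmax_set M g"
  unfolding argmax_set_def by auto

lemma argmax_set_mult_exp:
  assumes "\<And>m. m < M \<Longrightarrow> f m = c * exp (\<phi> m)" and "c > 0"
  shows "argmax_set M f = argmax_set M \<phi>"
  using assms unfolding argmax_set_def by auto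

lemma AE_eq_if_density_eq:
  fixes f g :: "'a \<Rightarrow> real"
  assumes "prob_space (density N (\<lambda>x. ennreal (f x)))"
    and "density N (\<lambda>x. ennreal (f x)) = density N (\<lambda>x. ennreal (g x))"
    and "f \<in> borel_measurable N" "g \<in> borel_measurable N" "\<And>x. f x \<ge> 0" "\<And>x. g x \<ge> 0"
  shows "AE x in N. f x = g x"
proof -
  have "AE x in N. ennreal (f x) = ennreal (g x)"
    using assms by (subst sigma_finite_density_unique[symmetric]) (auto simp: prob_space_imp_sigma_finite)
  then show ?thesis
    by eventually_elim (use assms(5,6) in simp)
qed

lemma AE_argmax_set_eq_if_density_eq:
  fixes f g :: "nat \<Rightarrow> 'a \<Rightarrow> real"
  assumes prob: "\<And>m. m < M \<Longrightarrow> prob_space (density N (\<lambda>x. ennreal (f m x)))"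
    and eq: "\<And>m. m < M \<Longrightarrow> density N (\<lambda>x. ennreal (f m x)) = density N (\<lambda>x. ennreal (g m x))"
    and f_measurable: "\<And>m. m < M \<Longrightarrow> f m \<in> borel_measurable N"
    and g_measurable: "\<And>m. m < M \<Longrightarrow> g m \<in> borel_measurable N"
    and nonneg: "\<And>m x. m < M \<Longrightarrow> f m x \<ge> 0" "\<And>m x. m < M \<Longrightarrow> g m x \<ge> 0"
  shows "AE x in N. argmax_set M (\<lambda>m. g m x) = argmax_set M (\<lambda>m. f m x)"
proof -
  have "AE x in N. f m x = g m x" if "m < M" for m
    using that by (intro AE_eq_if_density_eq prob eq f_measurable g_measurable nonneg)
  then have "AE x in N. \<forall>m\<in>{..<M}. f m x = g m x"
    by (intro eventually_ball_finite) auto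
  then show ?thesis
    by eventually_elim (intro argmax_set_cong, simp)
qed

lemma prob_space_fade_noise_law: "prob_space (fade_noise_law K M)"
  unfolding fade_noise_law_def
  by (intro prob_space_pair prob_space_PiM prob_space_CN01 prob_space_CNvec)

definition noise_link :: "nat \<Rightarrow> link" where
  "noise_link r = (if r = 0 then D0 else RD r)"

lemma inj_on_noise_link: "inj_on noise_link {..K}"
  by (auto simp: inj_on_def noise_link_def split: if_splits)

lemma noise_link_image: "noise_link ` {..K} = insert D0 (RD ` {1..K})"
  by (auto simp: noise_link_def image_iff intro!: bexI[of _ 0])

lemma links_eq_Un: "links K = SR ` {1..K} \<union> insert D0 (RD ` {1..K})"
  by (auto simp: links_def)

lemma obs_restrict_links:
  "obs g0d s0d g0r s0r grd srd K M m (restrict h (links K)) (restrict n (links K))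
     = obs g0d s0d g0r s0r grd srd K M m h n"
  unfolding obs_def by (intro restrict_ext) (auto simp: links_def)

locale relay_channel =
  fixes g0d s0d :: real and g0r s0r grd srd :: "nat \<Rightarrow> real" and K M :: nat
  assumes g0d_pos: "g0d > 0" and s0d_pos: "s0d > 0"
    and relay_pos: "\<forall>r\<in>{1..K}. g0r r > 0 \<and> s0r r > 0 \<and> grd r > 0 \<and> srd r > 0"
begin

abbreviation observe :: "nat \<Rightarrow> (link \<Rightarrow> complex) \<Rightarrow> (link \<Rightarrow> nat \<Rightarrow> complex) \<Rightarrow> nat \<Rightarrow> nat \<Rightarrow> complex" where
  "observe m h n \<equiv> obs g0d s0d g0r s0r grd srd K M m h n"

definition noise_scale :: "nat \<Rightarrow> real" where
  "noise_scale r = (if r = 0 then s0d else srd r)"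

text \<open>Given the fading \<open>h\<close> and the relay noise \<open>x = n\<^sub>0\<^sub>r\<close>, the observation \<open>y\<^sub>r\<close> is
  \<open>obs_mean\<close> plus the independent Gaussian noise \<open>noise_scale r \<cdot> n (noise_link r)\<close>.\<close>

definition obs_mean :: "nat \<Rightarrow> (link \<Rightarrow> complex) \<Rightarrow> (link \<Rightarrow> nat \<Rightarrow> complex) \<Rightarrow> nat \<Rightarrow> nat \<Rightarrow> complex" where
  "obs_mean m h x r j =
     (if r = 0 then complex_of_real s0d * (complex_of_real (sqrt g0d) * h D0 * unitv m j)
      else complex_of_real (s0r r * srd r * sqrt (g0r r * grd r)) * h (SR r) * h (RD r) * unitv m j
           + complex_of_real (s0r r * srd r * sqrt (grd r)) * h (RD r) * x (SR r) j)"

definition obs_cond_density ::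
    "nat \<Rightarrow> (link \<Rightarrow> complex) \<Rightarrow> (link \<Rightarrow> nat \<Rightarrow> complex) \<Rightarrow> (nat \<Rightarrow> nat \<Rightarrow> complex) \<Rightarrow> ennreal" where
  "obs_cond_density m h x y =
     (\<Prod>r\<in>{..K}. \<Prod>j\<in>{..<M}. ennreal (cgauss_density ((noise_scale r)\<^sup>2) (y r j - obs_mean m h x r j)))"

lemma noise_scale_pos: "r \<in> {..K} \<Longrightarrow> noise_scale r > 0"
  using s0d_pos relay_pos by (auto simp: noise_scale_def)

lemma obs_eq_mean_plus_noise:
  "observe m h n = (\<lambda>r\<in>{..K}. \<lambda>j\<in>{..<M}.
     obs_mean m h n r j + complex_of_real (noise_scale r) * n (noise_link r) j)"
  unfolding obs_def obs_mean_def noise_scale_def noise_link_def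
  by (intro restrict_ext) (auto simp: distrib_left)

lemma obs_mean_measurable[measurable]:
  assumes [measurable]: "h \<in> measurable N (PiM L (\<lambda>_. CN01))" "x \<in> measurable N (PiM L' (\<lambda>_. CNvec M))"
  shows "(\<lambda>w. obs_mean m (h w) (x w) r j) \<in> borel_measurable N"
  unfolding obs_mean_def by measurable

lemma obs_cond_density_measurable[measurable]:
  assumes [measurable]: "h \<in> measurable N (PiM L (\<lambda>_. CN01))" "x \<in> measurable N (PiM L' (\<lambda>_. CNvec M))"
    "y \<in> measurable N (obs_space K M)"
  shows "(\<lambda>w. obs_cond_density m (h w) (x w) (y w)) \<in> borel_measurable N"
  unfolding obs_cond_density_def by measurable

lemma nn_integral_obs_given_relay_noise:
  assumes \<phi>[measurable]: "\<phi> \<in> borel_measurable (obs_space K M)"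
  shows "(\<integral>\<^sup>+u. \<phi> (observe m h (merge (SR ` {1..K}) (insert D0 (RD ` {1..K})) (x, u)))
            \<partial>PiM (insert D0 (RD ` {1..K})) (\<lambda>_. CNvec M))
       = (\<integral>\<^sup>+y. obs_cond_density m h x y * \<phi> y \<partial>obs_space K M)"
proof -
  let ?Lf = "insert D0 (RD ` {1..K})"
  define \<Phi> where "\<Phi> v = (\<lambda>r\<in>{..K}. \<lambda>j\<in>{..<M}. obs_mean m h x r j + complex_of_real (noise_scale r) * v r j)"
    for v :: "nat \<Rightarrow> nat \<Rightarrow> complex"
  have select_measurable: "(\<lambda>u. \<lambda>r\<in>{..K}. u (noise_link r)) \<in> PiM ?Lf (\<lambda>_. CNvec M) \<rightarrow>\<^sub>M PiM {..K} (\<lambda>_. CNvec M)"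
    by (rule measurable_restrict) (auto simp: noise_link_def)
  have select_distr: "distr (PiM ?Lf (\<lambda>_. CNvec M)) (PiM {..K} (\<lambda>_. CNvec M)) (\<lambda>u. \<lambda>r\<in>{..K}. u (noise_link r))
      = PiM {..K} (\<lambda>_. CNvec M)"
  proof -
    have "noise_link \<in> {..K} \<rightarrow> ?Lf"
      using noise_link_image by blast
    then show ?thesis
      using distr_PiM_reindex[of ?Lf "\<lambda>_. CNvec M" noise_link "{..K}"]
      by (simp add: prob_space_CNvec inj_on_noise_link)
  qed
  have \<Phi>_measurable: "\<Phi> \<in> PiM {..K} (\<lambda>_. CNvec M) \<rightarrow>\<^sub>M obs_space K M"
    unfolding \<Phi>_def obs_space_def
    by (intro measurable_restrict) simp
  have distr_\<Phi>: "distr (PiM {..K} (\<lambda>_. CNvec M)) (obs_space K M) \<Phi> = density (obs_space K M)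
      (\<lambda>y. \<Prod>r\<in>{..K}. \<Prod>j\<in>{..<M}. ennreal (cgauss_density ((noise_scale r)\<^sup>2) (y r j - obs_mean m h x r j)))"
    unfolding \<Phi>_def by (rule distr_CNvecs_affine) (rule noise_scale_pos)
  have "(\<integral>\<^sup>+u. \<phi> (observe m h (merge (SR ` {1..K}) ?Lf (x, u))) \<partial>PiM ?Lf (\<lambda>_. CNvec M))
      = (\<integral>\<^sup>+u. \<phi> (\<Phi> (\<lambda>r\<in>{..K}. u (noise_link r))) \<partial>PiM ?Lf (\<lambda>_. CNvec M))"
    unfolding obs_eq_mean_plus_noise \<Phi>_def
    by (intro nn_integral_cong arg_cong[where f=\<phi>] restrict_ext)
      (auto simp: noise_link_def obs_mean_def merge_def)
  also have "\<dots> = (\<integral>\<^sup>+v. \<phi> (\<Phi> v) \<partial>distr (PiM ?Lf (\<lambda>_. CNvec M)) (PiM {..K} (\<lambda>_. CNvec M))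
      (\<lambda>u. \<lambda>r\<in>{..K}. u (noise_link r)))"
    by (rule nn_integral_distr[OF select_measurable, symmetric])
      (simp add: measurable_compose[OF \<Phi>_measurable \<phi>])
  also have "\<dots> = (\<integral>\<^sup>+v. \<phi> (\<Phi> v) \<partial>PiM {..K} (\<lambda>_. CNvec M))"
    by (simp only: select_distr)
  also have "\<dots> = (\<integral>\<^sup>+y. \<phi> y \<partial>distr (PiM {..K} (\<lambda>_. CNvec M)) (obs_space K M) \<Phi>)"
    by (simp add: nn_integral_distr[OF \<Phi>_measurable])
  also have "\<dots> = (\<integral>\<^sup>+y. obs_cond_density m h x y * \<phi> y \<partial>obs_space K M)"
    unfolding distr_\<Phi> obs_cond_density_def by (subst nn_integral_density) auto
  finally show ?thesis .
qed

lemma nn_integral_obs_given_fading: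
  assumes \<phi>[measurable]: "\<phi> \<in> borel_measurable (obs_space K M)"
    and h: "h \<in> space (PiM (links K) (\<lambda>_. CN01))"
  shows "(\<integral>\<^sup>+n. \<phi> (observe m h n) \<partial>PiM (links K) (\<lambda>_. CNvec M))
       = (\<integral>\<^sup>+x. (\<integral>\<^sup>+y. obs_cond_density m h x y * \<phi> y \<partial>obs_space K M) \<partial>PiM (SR ` {1..K}) (\<lambda>_. CNvec M))"
proof -
  interpret V: product_sigma_finite "\<lambda>_::link. CNvec M"
    unfolding product_sigma_finite_def by (simp add: prob_space_CNvec prob_space_imp_sigma_finite)
  note measurable_const[OF h, measurable]
  have obs_measurable: "(\<lambda>n. \<phi> (observe m h n)) \<in> borel_measurable (PiM (SR ` {1..K} \<union> insert D0 (RD ` {1..K})) (\<lambda>_. CNvec M))"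
    by measurable
  have "(\<integral>\<^sup>+n. \<phi> (observe m h n) \<partial>PiM (links K) (\<lambda>_. CNvec M))
      = (\<integral>\<^sup>+x. (\<integral>\<^sup>+u. \<phi> (observe m h (merge (SR ` {1..K}) (insert D0 (RD ` {1..K})) (x, u)))
            \<partial>PiM (insert D0 (RD ` {1..K})) (\<lambda>_. CNvec M)) \<partial>PiM (SR ` {1..K}) (\<lambda>_. CNvec M))"
    unfolding links_eq_Un by (rule V.product_nn_integral_fold[OF _ _ _ obs_measurable]) auto
  then show ?thesis
    by (simp only: nn_integral_obs_given_relay_noise[OF \<phi>])
qed

definition amp_signal :: "nat \<Rightarrow> real" where
  "amp_signal r = s0r r * srd r * sqrt (g0r r * grd r)"

definition amp_noise :: "nat \<Rightarrow> real" where
  "amp_noise r = s0r r * srd r * sqrt (grd r)"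

definition lik_direct :: "nat \<Rightarrow> (nat \<Rightarrow> nat \<Rightarrow> complex) \<Rightarrow> complex \<Rightarrow> ennreal" where
  "lik_direct m y z = (\<Prod>j\<in>{..<M}. ennreal (cgauss_density (s0d\<^sup>2)
     (y 0 j - complex_of_real (s0d * sqrt g0d) * z * unitv m j)))"

definition lik_relay :: "nat \<Rightarrow> (nat \<Rightarrow> nat \<Rightarrow> complex) \<Rightarrow> nat \<Rightarrow> complex \<Rightarrow> complex \<Rightarrow> ennreal" where
  "lik_relay m y r hrd h0r = (\<Prod>j\<in>{..<M}. ennreal (cgauss_density ((srd r)\<^sup>2 + (cmod (complex_of_real (amp_noise r) * hrd))\<^sup>2)
     (y r j - complex_of_real (amp_signal r) * hrd * h0r * unitv m j)))"

definition relay_gain :: "nat \<Rightarrow> (nat \<Rightarrow> nat \<Rightarrow> complex) \<Rightarrow> nat \<Rightarrow> real \<Rightarrow> real" where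
  "relay_gain m y r q = (\<Prod>j\<in>{..<M} - {m}. cgauss_density ((srd r)\<^sup>2 + (amp_noise r)\<^sup>2 * q) (y r j))
     * cgauss_density ((srd r)\<^sup>2 + (amp_noise r)\<^sup>2 * q + (amp_signal r)\<^sup>2 * q) (y r m)"

definition relay_I :: "nat \<Rightarrow> (nat \<Rightarrow> nat \<Rightarrow> complex) \<Rightarrow> nat \<Rightarrow> real" where
  "relay_I m y r = I_int ((s0r r)\<^sup>2 * grd r) ((1 + g0r r) * (s0r r)\<^sup>2 * grd r)
     (((\<Sum>j<M. (cmod (y r j))\<^sup>2) - (cmod (y r m))\<^sup>2) / (srd r)\<^sup>2) ((cmod (y r m))\<^sup>2 / (srd r)\<^sup>2) (real M - 1)"

lemma lik_direct_measurable[measurable]: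
  "f \<in> borel_measurable N \<Longrightarrow> (\<lambda>w. lik_direct m y (f w)) \<in> borel_measurable N"
  unfolding lik_direct_def by measurable

lemma lik_relay_measurable[measurable]:
  assumes [measurable]: "f \<in> borel_measurable N" "g \<in> borel_measurable N"
  shows "(\<lambda>w. lik_relay m y r (f w) (g w)) \<in> borel_measurable N"
  unfolding lik_relay_def cgauss_density_def by measurable

lemma relay_gain_measurable[measurable]: "relay_gain m y r \<in> borel_measurable borel"
  unfolding relay_gain_def cgauss_density_def by measurable

text \<open>Integrating out the relay noise \<open>n\<^sub>0\<^sub>r\<close>: it enters \<open>y\<^sub>r\<^sub>d\<close> scaled by \<open>amp_noise r \<cdot> h\<^sub>r\<^sub>d\<close>,
  which only inflates the noise variance.\<close>

lemma nn_integral_obs_cond_density_relay_noise: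
  "(\<integral>\<^sup>+x. obs_cond_density m h x y \<partial>PiM (SR ` {1..K}) (\<lambda>_. CNvec M))
    = lik_direct m y (h D0) * (\<Prod>r\<in>{1..K}. lik_relay m y r (h (RD r)) (h (SR r)))"
proof -
  define b where "b r j = y r j - complex_of_real (amp_signal r) * h (RD r) * h (SR r) * unitv m j" for r j
  define t where "t r = complex_of_real (amp_noise r) * h (RD r)" for r
  define B where "B r w = (\<Prod>j\<in>{..<M}. ennreal (cgauss_density ((srd r)\<^sup>2) (b r j - t r * w j)))" for r w
  have B_measurable: "B r \<in> borel_measurable (CNvec M)" for r
    unfolding B_def by measurable
  have B_component_measurable:
    "(\<lambda>x. B r (x (SR r))) \<in> borel_measurable (PiM (SR ` {1..K}) (\<lambda>_. CNvec M))" if "r \<in> {1..K}" for r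
    using measurable_compose[OF measurable_component_singleton[of "SR r" "SR ` {1..K}" "\<lambda>_. CNvec M"]
        B_measurable[of r]] that by simp
  have cond_density_eq:
    "obs_cond_density m h x y = lik_direct m y (h D0) * (\<Prod>r\<in>{1..K}. B r (x (SR r)))" for x
  proof -
    have "{..K} = insert 0 {1..K}" by auto
    then have "obs_cond_density m h x y
        = (\<Prod>j\<in>{..<M}. ennreal (cgauss_density ((noise_scale 0)\<^sup>2) (y 0 j - obs_mean m h x 0 j)))
          * (\<Prod>r\<in>{1..K}. \<Prod>j\<in>{..<M}. ennreal (cgauss_density ((noise_scale r)\<^sup>2) (y r j - obs_mean m h x r j)))"
      unfolding obs_cond_density_def by simp
    also have "(\<Prod>j\<in>{..<M}. ennreal (cgauss_density ((noise_scale 0)\<^sup>2) (y 0 j - obs_mean m h x 0 j)))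
        = lik_direct m y (h D0)"
      unfolding lik_direct_def by (intro prod.cong refl) (simp add: noise_scale_def obs_mean_def mult.assoc)
    also have "(\<Prod>r\<in>{1..K}. \<Prod>j\<in>{..<M}. ennreal (cgauss_density ((noise_scale r)\<^sup>2) (y r j - obs_mean m h x r j)))
        = (\<Prod>r\<in>{1..K}. B r (x (SR r)))"
      unfolding B_def b_def t_def
      by (intro prod.cong refl) (auto simp: noise_scale_def obs_mean_def amp_signal_def amp_noise_def algebra_simps)
    finally show ?thesis .
  qed
  have B_integral: "(\<integral>\<^sup>+w. B r w \<partial>CNvec M) = lik_relay m y r (h (RD r)) (h (SR r))" if r: "r \<in> {1..K}" for r
  proof -
    interpret C: product_sigma_finite "\<lambda>_::nat. CN01"
      unfolding product_sigma_finite_def by (simp add: prob_space_CN01 prob_space_imp_sigma_finite)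
    have srd: "srd r > 0" using relay_pos r by auto
    have "(\<integral>\<^sup>+w. B r w \<partial>CNvec M) = (\<Prod>j\<in>{..<M}. \<integral>\<^sup>+z. ennreal (cgauss_density ((srd r)\<^sup>2) (b r j - t r * z)) \<partial>CN01)"
      unfolding B_def CNvec_def by (rule C.product_nn_integral_prod) auto
    also have "\<dots> = lik_relay m y r (h (RD r)) (h (SR r))"
      unfolding lik_relay_def using srd
      by (intro prod.cong refl) (simp add: nn_integral_CN01_cgauss_density b_def t_def)
    finally show ?thesis .
  qed
  have "(\<integral>\<^sup>+x. obs_cond_density m h x y \<partial>PiM (SR ` {1..K}) (\<lambda>_. CNvec M))
      = lik_direct m y (h D0) * (\<integral>\<^sup>+x. (\<Prod>r\<in>{1..K}. B r (x (SR r))) \<partial>PiM (SR ` {1..K}) (\<lambda>_. CNvec M))"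
    unfolding cond_density_eq
    by (intro nn_integral_cmult borel_measurable_prod_ennreal B_component_measurable)
  also have "(\<integral>\<^sup>+x. (\<Prod>r\<in>{1..K}. B r (x (SR r))) \<partial>PiM (SR ` {1..K}) (\<lambda>_. CNvec M))
      = (\<Prod>r\<in>{1..K}. \<integral>\<^sup>+w. B r w \<partial>CNvec M)"
    by (rule nn_integral_PiM_prod_reindex)
      (auto simp: B_measurable prob_space_CNvec prob_space_imp_sigma_finite inj_on_def)
  also have "\<dots> = (\<Prod>r\<in>{1..K}. lik_relay m y r (h (RD r)) (h (SR r)))"
    by (rule prod.cong) (simp_all add: B_integral)
  finally show ?thesis .
qed

lemma nn_integral_lik_fading:
  "(\<integral>\<^sup>+h. lik_direct m y (h D0) * (\<Prod>r\<in>{1..K}. lik_relay m y r (h (RD r)) (h (SR r))) \<partial>PiM (links K) (\<lambda>_. CN01))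
    = (\<integral>\<^sup>+z. lik_direct m y z \<partial>CN01) * (\<Prod>r\<in>{1..K}. \<integral>\<^sup>+hrd. (\<integral>\<^sup>+h0r. lik_relay m y r hrd h0r \<partial>CN01) \<partial>CN01)"
proof -
  let ?Lf = "insert D0 (RD ` {1..K})" and ?Ls = "SR ` {1..K}"
  interpret C: product_sigma_finite "\<lambda>_::link. CN01"
    unfolding product_sigma_finite_def by (simp add: prob_space_CN01 prob_space_imp_sigma_finite)
  have C: "sigma_finite_measure CN01" by (simp add: prob_space_CN01 prob_space_imp_sigma_finite)
  define R where "R r hrd = (\<integral>\<^sup>+h0r. lik_relay m y r hrd h0r \<partial>CN01)" for r hrd
  have R_measurable: "R r \<in> borel_measurable CN01" for r
    unfolding R_def by measurable
  define F where "F r = (if r = 0 then lik_direct m y else R r)" for r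
  have F_measurable: "F r \<in> borel_measurable CN01" for r
    unfolding F_def by (auto simp: R_measurable)
  have K_split: "{..K} = insert 0 {1..K}" by auto
  have integrand_measurable: "(\<lambda>h. lik_direct m y (h D0) * (\<Prod>r\<in>{1..K}. lik_relay m y r (h (RD r)) (h (SR r))))
      \<in> borel_measurable (PiM (?Lf \<union> ?Ls) (\<lambda>_. CN01))"
    by measurable
  have inner: "(\<integral>\<^sup>+z. lik_direct m y (merge ?Lf ?Ls (u, z) D0)
        * (\<Prod>r\<in>{1..K}. lik_relay m y r (merge ?Lf ?Ls (u, z) (RD r)) (merge ?Lf ?Ls (u, z) (SR r))) \<partial>PiM ?Ls (\<lambda>_. CN01))
      = lik_direct m y (u D0) * (\<Prod>r\<in>{1..K}. R r (u (RD r)))" for u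
  proof -
    have "(\<integral>\<^sup>+z. lik_direct m y (merge ?Lf ?Ls (u, z) D0)
        * (\<Prod>r\<in>{1..K}. lik_relay m y r (merge ?Lf ?Ls (u, z) (RD r)) (merge ?Lf ?Ls (u, z) (SR r))) \<partial>PiM ?Ls (\<lambda>_. CN01))
      = (\<integral>\<^sup>+z. lik_direct m y (u D0) * (\<Prod>r\<in>{1..K}. lik_relay m y r (u (RD r)) (z (SR r))) \<partial>PiM ?Ls (\<lambda>_. CN01))"
      by (intro nn_integral_cong arg_cong2[where f="(*)"] prod.cong refl) (auto simp: merge_def)
    also have "\<dots> = lik_direct m y (u D0) * (\<integral>\<^sup>+z. (\<Prod>r\<in>{1..K}. lik_relay m y r (u (RD r)) (z (SR r))) \<partial>PiM ?Ls (\<lambda>_. CN01))"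
      by (intro nn_integral_cmult borel_measurable_prod_ennreal) measurable
    also have "\<dots> = lik_direct m y (u D0) * (\<Prod>r\<in>{1..K}. R r (u (RD r)))"
      unfolding R_def by (subst nn_integral_PiM_prod_reindex) (auto simp: C inj_on_def)
    finally show ?thesis .
  qed
  have "(\<integral>\<^sup>+h. lik_direct m y (h D0) * (\<Prod>r\<in>{1..K}. lik_relay m y r (h (RD r)) (h (SR r))) \<partial>PiM (links K) (\<lambda>_. CN01))
      = (\<integral>\<^sup>+u. (\<integral>\<^sup>+z. lik_direct m y (merge ?Lf ?Ls (u, z) D0)
        * (\<Prod>r\<in>{1..K}. lik_relay m y r (merge ?Lf ?Ls (u, z) (RD r)) (merge ?Lf ?Ls (u, z) (SR r)))
          \<partial>PiM ?Ls (\<lambda>_. CN01)) \<partial>PiM ?Lf (\<lambda>_. CN01))"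
    unfolding links_eq_Un Un_commute[of ?Ls] by (rule C.product_nn_integral_fold[OF _ _ _ integrand_measurable]) auto
  also have "\<dots> = (\<integral>\<^sup>+u. lik_direct m y (u D0) * (\<Prod>r\<in>{1..K}. R r (u (RD r))) \<partial>PiM ?Lf (\<lambda>_. CN01))"
    by (simp only: inner)
  also have "\<dots> = (\<integral>\<^sup>+u. (\<Prod>r\<in>{..K}. F r (u (noise_link r))) \<partial>PiM (noise_link ` {..K}) (\<lambda>_. CN01))"
  proof -
    have "(\<Prod>r\<in>{..K}. F r (u (noise_link r))) = lik_direct m y (u D0) * (\<Prod>r\<in>{1..K}. R r (u (RD r)))" for u
      by (simp add: K_split F_def noise_link_def)
    then show ?thesis by (simp add: noise_link_image)
  qed
  also have "\<dots> = (\<Prod>r\<in>{..K}. \<integral>\<^sup>+w. F r w \<partial>CN01)"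
    by (rule nn_integral_PiM_prod_reindex) (auto simp: C inj_on_noise_link F_measurable)
  finally show ?thesis
    by (simp add: K_split F_def R_def[abs_def])
qed

definition relay_integrand :: "nat \<Rightarrow> (nat \<Rightarrow> nat \<Rightarrow> complex) \<Rightarrow> nat \<Rightarrow> real \<Rightarrow> real" where
  "relay_integrand m y r = I_integrand ((s0r r)\<^sup>2 * grd r) ((1 + g0r r) * (s0r r)\<^sup>2 * grd r)
     (((\<Sum>j<M. (cmod (y r j))\<^sup>2) - (cmod (y r m))\<^sup>2) / (srd r)\<^sup>2) ((cmod (y r m))\<^sup>2 / (srd r)\<^sup>2) (real M - 1)"

lemma relay_I_params_nonneg:
  assumes "m < M" and "r \<in> {1..K}"
  shows "(s0r r)\<^sup>2 * grd r \<ge> 0" "(1 + g0r r) * (s0r r)\<^sup>2 * grd r \<ge> 0"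
    "((\<Sum>j<M. (cmod (y r j))\<^sup>2) - (cmod (y r m))\<^sup>2) / (srd r)\<^sup>2 \<ge> 0" "(cmod (y r m))\<^sup>2 / (srd r)\<^sup>2 \<ge> 0"
    "real M - 1 \<ge> 0"
proof -
  have "(cmod (y r m))\<^sup>2 \<le> (\<Sum>j<M. (cmod (y r j))\<^sup>2)"
    using assms by (intro member_le_sum) auto
  moreover have "g0r r > 0" "grd r > 0"
    using relay_pos assms(2) by auto
  ultimately show "(s0r r)\<^sup>2 * grd r \<ge> 0" "(1 + g0r r) * (s0r r)\<^sup>2 * grd r \<ge> 0"
    "((\<Sum>j<M. (cmod (y r j))\<^sup>2) - (cmod (y r m))\<^sup>2) / (srd r)\<^sup>2 \<ge> 0" "(cmod (y r m))\<^sup>2 / (srd r)\<^sup>2 \<ge> 0"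
    "real M - 1 \<ge> 0"
    using assms(1) by auto
qed

lemma relay_I_pos: "m < M \<Longrightarrow> r \<in> {1..K} \<Longrightarrow> relay_I m y r > 0"
  unfolding relay_I_def by (rule I_int_pos[OF relay_I_params_nonneg])

lemma relay_integrand_pos: "m < M \<Longrightarrow> r \<in> {1..K} \<Longrightarrow> q \<ge> 0 \<Longrightarrow> relay_integrand m y r q > 0"
  unfolding relay_integrand_def by (rule I_integrand_pos_le_exp(1)[OF relay_I_params_nonneg])

lemma nn_integral_relay_integrand:
  "m < M \<Longrightarrow> r \<in> {1..K} \<Longrightarrow>
    (\<integral>\<^sup>+q. ennreal (relay_integrand m y r q) * indicator {0..} q \<partial>lborel) = ennreal (relay_I m y r)"
  unfolding relay_integrand_def relay_I_def by (rule nn_integral_I_integrand[OF relay_I_params_nonneg])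

lemma relay_integrand_measurable[measurable]: "relay_integrand m y r \<in> borel_measurable borel"
  unfolding relay_integrand_def I_integrand_def by measurable

lemma nn_integral_lik_direct:
  assumes m: "m < M"
  shows "(\<integral>\<^sup>+z. lik_direct m y z \<partial>CN01)
       = ennreal (cgauss_density (s0d\<^sup>2 + s0d\<^sup>2 * g0d) (y 0 m) * (\<Prod>j\<in>{..<M} - {m}. cgauss_density (s0d\<^sup>2) (y 0 j)))"
proof -
  have "(\<integral>\<^sup>+z. lik_direct m y z \<partial>CN01)
      = ennreal (cgauss_density (s0d\<^sup>2 + (cmod (complex_of_real (s0d * sqrt g0d)))\<^sup>2) (y 0 m))
        * (\<Prod>j\<in>{..<M} - {m}. ennreal (cgauss_density (s0d\<^sup>2) (y 0 j)))"
    unfolding lik_direct_def using s0d_pos by (intro nn_integral_CN01_prod_cgauss_unitv[OF _ m]) simp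
  also have "(cmod (complex_of_real (s0d * sqrt g0d)))\<^sup>2 = s0d\<^sup>2 * g0d"
    using g0d_pos s0d_pos by (simp add: power_mult_distrib norm_mult abs_mult)
  finally show ?thesis
    using s0d_pos g0d_pos
    by (simp add: prod_ennreal cgauss_density_nonneg ennreal_mult[symmetric] prod_nonneg)
qed

lemma nn_integral_lik_relay_h0r:
  assumes m: "m < M" and r: "r \<in> {1..K}"
  shows "(\<integral>\<^sup>+h0r. lik_relay m y r hrd h0r \<partial>CN01) = ennreal (relay_gain m y r ((cmod hrd)\<^sup>2))"
proof -
  have "srd r > 0" using relay_pos r by auto
  then have s: "(srd r)\<^sup>2 + (cmod (complex_of_real (amp_noise r) * hrd))\<^sup>2 > 0"
    by (simp add: add_pos_nonneg)
  have "(\<integral>\<^sup>+h0r. lik_relay m y r hrd h0r \<partial>CN01)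
      = ennreal (cgauss_density ((srd r)\<^sup>2 + (cmod (complex_of_real (amp_noise r) * hrd))\<^sup>2
          + (cmod (complex_of_real (amp_signal r) * hrd))\<^sup>2) (y r m))
        * (\<Prod>j\<in>{..<M} - {m}. ennreal (cgauss_density ((srd r)\<^sup>2 + (cmod (complex_of_real (amp_noise r) * hrd))\<^sup>2) (y r j)))"
    unfolding lik_relay_def by (rule nn_integral_CN01_prod_cgauss_unitv[OF s m])
  then show ?thesis
    using s by (simp add: relay_gain_def norm_mult power_mult_distrib prod_ennreal cgauss_density_nonneg
        ennreal_mult[symmetric] prod_nonneg mult.commute)
qed

text \<open>Writing \<open>q = |h\<^sub>r\<^sub>d|\<^sup>2\<close>, the variances of \<open>y\<^sub>r\<^sub>d\<close> off and on the signal carrier are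
  \<open>\<sigma>\<^sub>r\<^sub>d\<^sup>2 (1 + \<epsilon>\<^sub>1 q)\<close> and \<open>\<sigma>\<^sub>r\<^sub>d\<^sup>2 (1 + \<epsilon>\<^sub>2 q)\<close>, which produces the integrand of \<open>I\<close>.\<close>

lemma exp_mult_relay_gain:
  assumes m: "m < M" and r: "r \<in> {1..K}" and q: "q \<ge> 0"
  shows "exp (- q) * relay_gain m y r q = (1 / (pi * (srd r)\<^sup>2)) ^ M * relay_integrand m y r q"
proof -
  have pos: "g0r r > 0" "s0r r > 0" "grd r > 0" "srd r > 0" using relay_pos r by auto
  define S where "S = (srd r)\<^sup>2"
  define u where "u = 1 + (s0r r)\<^sup>2 * grd r * q"
  define v where "v = 1 + (1 + g0r r) * (s0r r)\<^sup>2 * grd r * q"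
  define T where "T = (\<Sum>j<M. (cmod (y r j))\<^sup>2)"
  define B where "B = (cmod (y r m))\<^sup>2"
  have S: "S > 0" using pos by (simp add: S_def)
  have u: "u > 0" using pos q by (simp add: u_def add_pos_nonneg)
  have v: "v > 0" using pos q by (simp add: v_def add_pos_nonneg)
  have var_off: "(srd r)\<^sup>2 + (amp_noise r)\<^sup>2 * q = S * u"
    using pos by (simp add: amp_noise_def S_def u_def algebra_simps)
  have var_on: "S * u + (amp_signal r)\<^sup>2 * q = S * v"
    using pos by (simp add: amp_signal_def S_def u_def v_def algebra_simps)
  have "exp (- q) * relay_gain m y r q
      = exp (- q) * (exp ((B - T) / (S * u)) / (pi * (S * u)) ^ (M - 1)) * (exp (- B / (S * v)) / (pi * (S * v)))"
    unfolding relay_gain_def var_off var_on prod_cgauss_density_remove[OF m]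
    by (simp add: cgauss_density_def T_def B_def)
  also have "\<dots> = (exp (- q) * exp ((B - T) / (S * u)) * exp (- B / (S * v))) / ((pi * S) ^ Suc (M - 1) * (u ^ (M - 1) * v))"
    using S u v by (simp add: field_simps)
  also have "exp (- q) * exp ((B - T) / (S * u)) * exp (- B / (S * v)) = exp (- (q + ((T - B) / S) / u + (B / S) / v))"
    using S u v by (simp add: exp_add[symmetric] field_simps)
  also have "Suc (M - 1) = M" using m by simp
  also have "u ^ (M - 1) = u powr (real M - 1)"
    using u m by (simp add: powr_realpow[symmetric])
  finally show ?thesis
    using S by (simp add: relay_integrand_def I_integrand_def S_def T_def B_def u_def v_def field_simps)
qed

text \<open>The remaining integral over \<open>h\<^sub>r\<^sub>d\<close> depends only on \<open>q = |h\<^sub>r\<^sub>d|\<^sup>2\<close>, which is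
  exponentially distributed.\<close>

lemma nn_integral_lik_relay:
  assumes m: "m < M" and r: "r \<in> {1..K}"
  shows "(\<integral>\<^sup>+hrd. (\<integral>\<^sup>+h0r. lik_relay m y r hrd h0r \<partial>CN01) \<partial>CN01)
       = ennreal ((1 / (pi * (srd r)\<^sup>2)) ^ M * relay_I m y r)"
proof -
  let ?C = "(1 / (pi * (srd r)\<^sup>2)) ^ M"
  have gain_measurable: "(\<lambda>q. ennreal (exp (- q) / pi * relay_gain m y r q)) \<in> borel_measurable borel"
    by measurable
  have gain_nonneg: "relay_gain m y r q \<ge> 0" if "q \<ge> 0" for q
  proof -
    have "0 \<le> exp (- q) * relay_gain m y r q"
      using exp_mult_relay_gain[OF m r that] relay_integrand_pos[of m r q y, OF m r that] by simp
    then show ?thesis by (simp add: zero_le_mult_iff)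
  qed
  have "(\<integral>\<^sup>+hrd. (\<integral>\<^sup>+h0r. lik_relay m y r hrd h0r \<partial>CN01) \<partial>CN01)
      = (\<integral>\<^sup>+z. ennreal (exp (- (cmod z)\<^sup>2) / pi * relay_gain m y r ((cmod z)\<^sup>2)) \<partial>lborel)"
    by (simp add: nn_integral_lik_relay_h0r[OF m r] nn_integral_CN01 cgauss_density_def
        ennreal_mult[symmetric] gain_nonneg)
  also have "\<dots> = ennreal pi * (\<integral>\<^sup>+q. ennreal (exp (- q) / pi * relay_gain m y r q) * indicator {0..} q \<partial>lborel)"
    by (rule nn_integral_lborel_complex_radial[OF gain_measurable])
  also have "\<dots> = (\<integral>\<^sup>+q. ennreal ?C * (ennreal (relay_integrand m y r q) * indicator {0..} q) \<partial>lborel)"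
  proof (subst nn_integral_cmult[symmetric], measurable, intro nn_integral_cong)
    fix q :: real
    show "ennreal pi * (ennreal (exp (- q) / pi * relay_gain m y r q) * indicator {0..} q)
        = ennreal ?C * (ennreal (relay_integrand m y r q) * indicator {0..} q)"
    proof (cases "q \<ge> 0")
      case True
      have "ennreal pi * ennreal (exp (- q) / pi * relay_gain m y r q)
          = ennreal (pi * (exp (- q) / pi * relay_gain m y r q))"
        by (rule ennreal_mult[symmetric]) (use gain_nonneg[OF True] in simp_all)
      also have "pi * (exp (- q) / pi * relay_gain m y r q) = ?C * relay_integrand m y r q"
        using exp_mult_relay_gain[OF m r True] by simp
      also have "ennreal (?C * relay_integrand m y r q) = ennreal ?C * ennreal (relay_integrand m y r q)"
        by (rule ennreal_mult) (use relay_integrand_pos[of m r q y, OF m r True] in auto)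
      finally show ?thesis
        using True by simp
    qed simp
  qed
  also have "\<dots> = ennreal ?C * ennreal (relay_I m y r)"
    by (simp add: nn_integral_cmult nn_integral_relay_integrand[OF m r])
  finally show ?thesis
    using relay_I_pos[of m r y, OF m r] by (simp add: ennreal_mult less_imp_le)
qed

definition obs_density :: "nat \<Rightarrow> (nat \<Rightarrow> nat \<Rightarrow> complex) \<Rightarrow> real" where
  "obs_density m y = cgauss_density (s0d\<^sup>2 + s0d\<^sup>2 * g0d) (y 0 m) * (\<Prod>j\<in>{..<M} - {m}. cgauss_density (s0d\<^sup>2) (y 0 j))
     * (\<Prod>r\<in>{1..K}. (1 / (pi * (srd r)\<^sup>2)) ^ M * relay_I m y r)"

definition obs_density_scale :: "(nat \<Rightarrow> nat \<Rightarrow> complex) \<Rightarrow> real" where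
  "obs_density_scale y = (1 / (pi * s0d\<^sup>2)) ^ M / (1 + g0d) * exp (- (\<Sum>j<M. (cmod (y 0 j))\<^sup>2) / s0d\<^sup>2)
     * (\<Prod>r\<in>{1..K}. (1 / (pi * (srd r)\<^sup>2)) ^ M)"

lemma nn_integral_obs_cond_density:
  assumes m: "m < M"
  shows "(\<integral>\<^sup>+h. (\<integral>\<^sup>+x. obs_cond_density m h x y \<partial>PiM (SR ` {1..K}) (\<lambda>_. CNvec M)) \<partial>PiM (links K) (\<lambda>_. CN01))
       = ennreal (obs_density m y)"
proof -
  let ?direct = "cgauss_density (s0d\<^sup>2 + s0d\<^sup>2 * g0d) (y 0 m) * (\<Prod>j\<in>{..<M} - {m}. cgauss_density (s0d\<^sup>2) (y 0 j))"
  let ?relay = "\<lambda>r. (1 / (pi * (srd r)\<^sup>2)) ^ M * relay_I m y r"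
  have direct_nonneg: "?direct \<ge> 0"
    using g0d_pos by (intro mult_nonneg_nonneg prod_nonneg cgauss_density_nonneg) auto
  have relay_nonneg: "?relay r \<ge> 0" if "r \<in> {1..K}" for r
    using less_imp_le[OF relay_I_pos[OF m that]] by simp
  have "(\<integral>\<^sup>+h. (\<integral>\<^sup>+x. obs_cond_density m h x y \<partial>PiM (SR ` {1..K}) (\<lambda>_. CNvec M)) \<partial>PiM (links K) (\<lambda>_. CN01))
      = (\<integral>\<^sup>+z. lik_direct m y z \<partial>CN01) * (\<Prod>r\<in>{1..K}. \<integral>\<^sup>+hrd. (\<integral>\<^sup>+h0r. lik_relay m y r hrd h0r \<partial>CN01) \<partial>CN01)"
    unfolding nn_integral_obs_cond_density_relay_noise by (rule nn_integral_lik_fading)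
  also have "\<dots> = ennreal ?direct * (\<Prod>r\<in>{1..K}. ennreal (?relay r))"
    by (simp add: nn_integral_lik_direct[OF m] nn_integral_lik_relay[OF m])
  also have "(\<Prod>r\<in>{1..K}. ennreal (?relay r)) = ennreal (\<Prod>r\<in>{1..K}. ?relay r)"
    by (rule prod_ennreal) (use relay_nonneg in auto)
  also have "ennreal ?direct * ennreal (\<Prod>r\<in>{1..K}. ?relay r) = ennreal (obs_density m y)"
    unfolding obs_density_def using direct_nonneg relay_nonneg
    by (intro ennreal_mult[symmetric] prod_nonneg) auto
  finally show ?thesis .
qed

lemma ml_metric_eq:
  "ml_metric g0d s0d g0r s0r grd srd K M y m
     = g0d / (1 + g0d) * (cmod (y 0 m))\<^sup>2 / s0d\<^sup>2 + (\<Sum>r=1..K. ln (relay_I m y r))"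
  by (simp add: ml_metric_def relay_I_def)

lemma direct_density_eq:
  assumes m: "m < M"
  shows "cgauss_density (s0d\<^sup>2 + s0d\<^sup>2 * g0d) (y 0 m) * (\<Prod>j\<in>{..<M} - {m}. cgauss_density (s0d\<^sup>2) (y 0 j))
       = (1 / (pi * s0d\<^sup>2)) ^ M / (1 + g0d) * exp (- (\<Sum>j<M. (cmod (y 0 j))\<^sup>2) / s0d\<^sup>2)
         * exp (g0d / (1 + g0d) * (cmod (y 0 m))\<^sup>2 / s0d\<^sup>2)"
proof -
  define S where "S = s0d\<^sup>2"
  define a where "a = (cmod (y 0 m))\<^sup>2"
  define T where "T = (\<Sum>j<M. (cmod (y 0 j))\<^sup>2)"
  have S: "S > 0" using s0d_pos by (simp add: S_def)
  have g: "1 + g0d > 0" using g0d_pos by simp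
  have Sg: "S + S * g0d > 0" using S g0d_pos by (simp add: add_pos_pos)
  have "cgauss_density (S + S * g0d) (y 0 m) * (\<Prod>j\<in>{..<M} - {m}. cgauss_density S (y 0 j))
      = (exp (- a / (S * (1 + g0d))) * exp ((a - T) / S)) / ((pi * S) ^ Suc (M - 1) * (1 + g0d))"
    unfolding prod_cgauss_density_remove[OF m]
    using S g by (simp add: cgauss_density_def a_def T_def field_simps)
  also have "exp (- a / (S * (1 + g0d))) * exp ((a - T) / S) = exp (- T / S) * exp (g0d / (1 + g0d) * a / S)"
    using S g Sg by (simp add: exp_add[symmetric] field_simps)
  also have "Suc (M - 1) = M" using m by simp
  finally show ?thesis
    using S g by (simp add: S_def a_def T_def field_simps)
qed

lemma obs_density_eq_exp_ml_metric:
  assumes m: "m < M"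
  shows "obs_density m y = obs_density_scale y * exp (ml_metric g0d s0d g0r s0r grd srd K M y m)"
proof -
  have "(\<Prod>r\<in>{1..K}. relay_I m y r) = exp (\<Sum>r=1..K. ln (relay_I m y r))"
    using relay_I_pos[OF m] by (simp add: exp_sum)
  then show ?thesis
    unfolding obs_density_def obs_density_scale_def ml_metric_eq direct_density_eq[OF m]
    by (simp add: prod.distrib exp_add)
qed

lemma obs_density_scale_pos: "obs_density_scale y > 0"
  unfolding obs_density_scale_def using s0d_pos g0d_pos relay_pos
  by (auto intro!: prod_pos mult_pos_pos divide_pos_pos)

lemma obs_density_pos: "m < M \<Longrightarrow> obs_density m y > 0"
  by (simp add: obs_density_eq_exp_ml_metric obs_density_scale_pos)

lemma obs_density_measurable: "m < M \<Longrightarrow> obs_density m \<in> borel_measurable (obs_space K M)"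
proof -
  assume m: "m < M"
  interpret H: sigma_finite_measure "PiM (links K) (\<lambda>_. CN01)"
    by (intro prob_space_imp_sigma_finite prob_space_PiM prob_space_CN01)
  interpret X: sigma_finite_measure "PiM (SR ` {1..K}) (\<lambda>_. CNvec M)"
    by (intro prob_space_imp_sigma_finite prob_space_PiM prob_space_CNvec)
  have "(\<lambda>y. enn2real (\<integral>\<^sup>+h. (\<integral>\<^sup>+x. obs_cond_density m h x y \<partial>PiM (SR ` {1..K}) (\<lambda>_. CNvec M))
      \<partial>PiM (links K) (\<lambda>_. CN01))) \<in> borel_measurable (obs_space K M)"
    by measurable
  moreover have "(\<lambda>y. enn2real (\<integral>\<^sup>+h. (\<integral>\<^sup>+x. obs_cond_density m h x y \<partial>PiM (SR ` {1..K}) (\<lambda>_. CNvec M))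
      \<partial>PiM (links K) (\<lambda>_. CN01))) = obs_density m"
    unfolding nn_integral_obs_cond_density[OF m] using obs_density_pos[OF m] by (simp add: fun_eq_iff less_imp_le)
  ultimately show ?thesis by simp
qed

lemma nn_integral_fade_noise_law_observe:
  assumes \<phi>[measurable]: "\<phi> \<in> borel_measurable (obs_space K M)"
  shows "(\<integral>\<^sup>+\<omega>. \<phi> (observe m (fst \<omega>) (snd \<omega>)) \<partial>fade_noise_law K M)
     = (\<integral>\<^sup>+y. (\<integral>\<^sup>+h. (\<integral>\<^sup>+x. obs_cond_density m h x y \<partial>PiM (SR ` {1..K}) (\<lambda>_. CNvec M))
          \<partial>PiM (links K) (\<lambda>_. CN01)) * \<phi> y \<partial>obs_space K M)"
proof -
  let ?H = "PiM (links K) (\<lambda>_. CN01)" and ?N = "PiM (links K) (\<lambda>_. CNvec M)"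
  let ?X = "PiM (SR ` {1..K}) (\<lambda>_. CNvec M)" and ?S = "obs_space K M"
  have H: "sigma_finite_measure ?H" by (intro prob_space_imp_sigma_finite prob_space_PiM prob_space_CN01)
  have N: "sigma_finite_measure ?N" by (intro prob_space_imp_sigma_finite prob_space_PiM prob_space_CNvec)
  have X: "sigma_finite_measure ?X" by (intro prob_space_imp_sigma_finite prob_space_PiM prob_space_CNvec)
  have S: "sigma_finite_measure ?S"
  proof -
    interpret product_sigma_finite "\<lambda>_::nat. PiM {..<M} (\<lambda>_. (lborel :: complex measure))"
      unfolding product_sigma_finite_def by (simp add: sigma_finite_PiM_lborel)
    show ?thesis unfolding obs_space_def by (rule sigma_finite) simp
  qed
  interpret HN: pair_sigma_finite ?H ?N using H N by (simp add: pair_sigma_finite_def)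
  interpret XS: pair_sigma_finite ?X ?S using X S by (simp add: pair_sigma_finite_def)
  interpret HS: pair_sigma_finite ?H ?S using H S by (simp add: pair_sigma_finite_def)
  have "(\<integral>\<^sup>+\<omega>. \<phi> (observe m (fst \<omega>) (snd \<omega>)) \<partial>fade_noise_law K M)
      = (\<integral>\<^sup>+h. (\<integral>\<^sup>+n. \<phi> (observe m h n) \<partial>?N) \<partial>?H)"
  proof -
    have integrand_measurable: "(\<lambda>\<omega>. \<phi> (observe m (fst \<omega>) (snd \<omega>))) \<in> borel_measurable (?H \<Otimes>\<^sub>M ?N)"
      by measurable
    show ?thesis
      unfolding fade_noise_law_def using HN.M2.nn_integral_fst[OF integrand_measurable] by simp
  qed
  also have "\<dots> = (\<integral>\<^sup>+h. (\<integral>\<^sup>+x. (\<integral>\<^sup>+y. obs_cond_density m h x y * \<phi> y \<partial>?S) \<partial>?X) \<partial>?H)"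
    by (intro nn_integral_cong nn_integral_obs_given_fading \<phi>)
  also have "\<dots> = (\<integral>\<^sup>+h. (\<integral>\<^sup>+y. (\<integral>\<^sup>+x. obs_cond_density m h x y * \<phi> y \<partial>?X) \<partial>?S) \<partial>?H)"
  proof (intro nn_integral_cong)
    fix h assume "h \<in> space ?H"
    note measurable_const[OF this, measurable]
    show "(\<integral>\<^sup>+x. (\<integral>\<^sup>+y. obs_cond_density m h x y * \<phi> y \<partial>?S) \<partial>?X)
        = (\<integral>\<^sup>+y. (\<integral>\<^sup>+x. obs_cond_density m h x y * \<phi> y \<partial>?X) \<partial>?S)"
      by (rule XS.Fubini'[symmetric]) measurable
  qed
  also have "\<dots> = (\<integral>\<^sup>+y. (\<integral>\<^sup>+h. (\<integral>\<^sup>+x. obs_cond_density m h x y * \<phi> y \<partial>?X) \<partial>?H) \<partial>?S)"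
    by (rule HS.Fubini'[symmetric]) measurable
  also have "\<dots> = (\<integral>\<^sup>+y. (\<integral>\<^sup>+h. (\<integral>\<^sup>+x. obs_cond_density m h x y \<partial>?X) \<partial>?H) * \<phi> y \<partial>?S)"
  proof (intro nn_integral_cong)
    fix y assume "y \<in> space ?S"
    note measurable_const[OF this, measurable]
    have "(\<integral>\<^sup>+h. (\<integral>\<^sup>+x. obs_cond_density m h x y * \<phi> y \<partial>?X) \<partial>?H)
        = (\<integral>\<^sup>+h. (\<integral>\<^sup>+x. obs_cond_density m h x y \<partial>?X) * \<phi> y \<partial>?H)"
    proof (intro nn_integral_cong)
      fix h assume "h \<in> space ?H"
      note measurable_const[OF this, measurable]
      show "(\<integral>\<^sup>+x. obs_cond_density m h x y * \<phi> y \<partial>?X) = (\<integral>\<^sup>+x. obs_cond_density m h x y \<partial>?X) * \<phi> y"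
        by (rule nn_integral_multc) measurable
    qed
    also have "\<dots> = (\<integral>\<^sup>+h. (\<integral>\<^sup>+x. obs_cond_density m h x y \<partial>?X) \<partial>?H) * \<phi> y"
      by (rule nn_integral_multc) measurable
    finally show "(\<integral>\<^sup>+h. (\<integral>\<^sup>+x. obs_cond_density m h x y * \<phi> y \<partial>?X) \<partial>?H)
        = (\<integral>\<^sup>+h. (\<integral>\<^sup>+x. obs_cond_density m h x y \<partial>?X) \<partial>?H) * \<phi> y" .
  qed
  finally show ?thesis .
qed

lemma observe_measurable: "(\<lambda>\<omega>. observe m (fst \<omega>) (snd \<omega>)) \<in> fade_noise_law K M \<rightarrow>\<^sub>M obs_space K M"
  unfolding fade_noise_law_def by measurable

lemma distr_fade_noise_law_observe:
  assumes m: "m < M"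
  shows "distr (fade_noise_law K M) (obs_space K M) (\<lambda>\<omega>. observe m (fst \<omega>) (snd \<omega>))
       = density (obs_space K M) (\<lambda>y. ennreal (obs_density m y))"
proof (rule measure_eqI)
  fix A assume "A \<in> sets (distr (fade_noise_law K M) (obs_space K M) (\<lambda>\<omega>. observe m (fst \<omega>) (snd \<omega>)))"
  then have A[measurable]: "A \<in> sets (obs_space K M)" by simp
  have "emeasure (distr (fade_noise_law K M) (obs_space K M) (\<lambda>\<omega>. observe m (fst \<omega>) (snd \<omega>))) A
      = (\<integral>\<^sup>+\<omega>. indicator A (observe m (fst \<omega>) (snd \<omega>)) \<partial>fade_noise_law K M)"
    by (simp add: nn_integral_indicator[symmetric] nn_integral_distr[OF observe_measurable]
        del: nn_integral_indicator)
  also have "\<dots> = (\<integral>\<^sup>+y. (\<integral>\<^sup>+h. (\<integral>\<^sup>+x. obs_cond_density m h x y \<partial>PiM (SR ` {1..K}) (\<lambda>_. CNvec M))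
          \<partial>PiM (links K) (\<lambda>_. CN01)) * indicator A y \<partial>obs_space K M)"
    by (rule nn_integral_fade_noise_law_observe) measurable
  also have "\<dots> = (\<integral>\<^sup>+y. ennreal (obs_density m y) * indicator A y \<partial>obs_space K M)"
    unfolding nn_integral_obs_cond_density[OF m] ..
  finally show "emeasure (distr (fade_noise_law K M) (obs_space K M) (\<lambda>\<omega>. observe m (fst \<omega>) (snd \<omega>))) A
      = emeasure (density (obs_space K M) (\<lambda>y. ennreal (obs_density m y))) A"
    using obs_density_measurable[OF m] by (simp add: emeasure_density)
qed simp

lemma prob_space_density_obs_density:
  assumes "m < M"
  shows "prob_space (density (obs_space K M) (\<lambda>y. ennreal (obs_density m y)))"
  using prob_space.prob_space_distr[OF prob_space_fade_noise_law observe_measurable[of m]]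
  by (simp add: distr_fade_noise_law_observe[OF assms])

lemma distr_observe_comp:
  assumes \<Psi>: "\<Psi> \<in> P \<rightarrow>\<^sub>M fade_noise_law K M" and law: "distr P (fade_noise_law K M) \<Psi> = fade_noise_law K M"
    and m: "m < M"
  shows "distr P (obs_space K M) (\<lambda>\<omega>. observe m (fst (\<Psi> \<omega>)) (snd (\<Psi> \<omega>)))
       = density (obs_space K M) (\<lambda>y. ennreal (obs_density m y))"
  using distr_distr[OF observe_measurable \<Psi>] law distr_fade_noise_law_observe[OF m]
  by (simp add: comp_def)

end

theorem theorem1:
  fixes P :: "'a measure"
    and h :: "link \<Rightarrow> 'a \<Rightarrow> complex"
    and n :: "link \<Rightarrow> 'a \<Rightarrow> nat \<Rightarrow> complex"
    and M K :: nat
    and g0d s0d :: real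
    and g0r s0r grd srd :: "nat \<Rightarrow> real"
  assumes "prob_space P"
    and "M \<ge> 2" and "K \<ge> 1"
    and "g0d > 0" and "s0d > 0"
    and "\<forall>r\<in>{1..K}. g0r r > 0 \<and> s0r r > 0 \<and> grd r > 0 \<and> srd r > 0"
    and "(\<lambda>\<omega>. (\<lambda>l\<in>links K. h l \<omega>, \<lambda>l\<in>links K. n l \<omega>)) \<in> measurable P (fade_noise_law K M)"
    and "distr P (fade_noise_law K M) (\<lambda>\<omega>. (\<lambda>l\<in>links K. h l \<omega>, \<lambda>l\<in>links K. n l \<omega>))
           = fade_noise_law K M"
  defines "Y \<equiv> \<lambda>m \<omega>. obs g0d s0d g0r s0r grd srd K M m (\<lambda>l. h l \<omega>) (\<lambda>l. n l \<omega>)"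
  shows "(\<exists>g :: nat \<Rightarrow> (nat \<Rightarrow> nat \<Rightarrow> complex) \<Rightarrow> real.
            (\<forall>m<M. (\<forall>y. 0 \<le> g m y) \<and> g m \<in> borel_measurable (obs_space K M)
                  \<and> distr P (obs_space K M) (Y m) = density (obs_space K M) (\<lambda>y. ennreal (g m y)))
            \<and> (\<forall>y\<in>space (obs_space K M).
                  argmax_set M (\<lambda>m. g m y) = argmax_set M (ml_metric g0d s0d g0r s0r grd srd K M y)))
       \<and> (\<forall>g :: nat \<Rightarrow> (nat \<Rightarrow> nat \<Rightarrow> complex) \<Rightarrow> real.
            (\<forall>m<M. (\<forall>y. 0 \<le> g m y) \<and> g m \<in> borel_measurable (obs_space K M)
                  \<and> distr P (obs_space K M) (Y m) = density (obs_space K M) (\<lambda>y. ennreal (g m y)))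
            \<longrightarrow> (AE y in obs_space K M.
                  argmax_set M (\<lambda>m. g m y) = argmax_set M (ml_metric g0d s0d g0r s0r grd srd K M y)))"
proof -
  interpret relay_channel g0d s0d g0r s0r grd srd K M
    using assms(4-6) by unfold_locales
  have distr_Y: "distr P (obs_space K M) (Y m) = density (obs_space K M) (\<lambda>y. ennreal (obs_density m y))"
    if "m < M" for m
    using distr_observe_comp[OF assms(7,8) that] by (simp add: Y_def obs_restrict_links)
  have obs_density_nonneg: "0 \<le> obs_density m y" if "m < M" for m y
    using less_imp_le[OF obs_density_pos[OF that]] .
  have argmax_eq: "argmax_set M (\<lambda>m. obs_density m y) = argmax_set M (ml_metric g0d s0d g0r s0r grd srd K M y)" for y
    by (rule argmax_set_mult_exp[OF obs_density_eq_exp_ml_metric obs_density_scale_pos])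
  have likelihood: "\<forall>m<M. (\<forall>y. 0 \<le> obs_density m y) \<and> obs_density m \<in> borel_measurable (obs_space K M)
      \<and> distr P (obs_space K M) (Y m) = density (obs_space K M) (\<lambda>y. ennreal (obs_density m y))"
    using distr_Y obs_density_measurable obs_density_nonneg by blast
  have "AE y in obs_space K M. argmax_set M (\<lambda>m. g m y) = argmax_set M (\<lambda>m. obs_density m y)"
    if g: "\<forall>m<M. (\<forall>y. 0 \<le> g m y) \<and> g m \<in> borel_measurable (obs_space K M)
        \<and> distr P (obs_space K M) (Y m) = density (obs_space K M) (\<lambda>y. ennreal (g m y))" for g
  proof (rule AE_argmax_set_eq_if_density_eq)
    show "density (obs_space K M) (\<lambda>y. ennreal (obs_density m y)) = density (obs_space K M) (\<lambda>y. ennreal (g m y))"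
      if "m < M" for m
      using g that distr_Y[OF that] by simp
  qed (use g obs_density_measurable obs_density_nonneg prob_space_density_obs_density in simp_all)
  then show ?thesis
    using likelihood by (intro conjI exI[of _ obs_density]) (simp_all add: argmax_eq)
qed

end
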